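(* Let $\gamma>1$, $\varphi_\rho(z)=z\log z$, $\varphi_e(z)=-\frac{1}{\gamma-1}\log z$ ($z>0$). In the discrete setting of the context, let positive $(\rho_K^n,e_K^n,p_K^n)$, positive face values $\rho_\sigma^{n+1},e_\sigma^{n+1}$ and normal velocities $u_{K,\sigma}^{n+1}$ satisfy, for all $K\in\mathcal M$, $0\le n\le N-1$, the implicit scheme \[ \frac{|K|}{\delta t}(\rho_K^{n+1}-\rho_K^n)+\sum_{\sigma\in\mathcal{E}(K)}F_{K,\sigma}^{n+1}=0, \] \[ \frac{|K|}{\delta t}(\rho_K^{n+1}e_K^{n+1}-\rho_K^ne_K^n)+\sum_{\sigma\in\mathcal{E}(K)}F_{K,\sigma}^{n+1}e_\sigma^{n+1}+p_K^{n+1}\sum_{\sigma\in\mathcal{E}(K)}|\sigma|\,u_{K,\sigma}^{n+1}\ge 0,\qquad p_K^{n+1}=(\gamma-1)\rho_K^{n+1}e_K^{n+1}, \] with $F_{K,\sigma}^{n+1}=|\sigma|\rho_\sigma^{n+1}u_{K,\sigma}^{n+1}$. For $\sigma=K|L\in\mathcal{E}_{\rm int}$ let $\rho_{KL}^{n+1}$ (resp. $e_{KL}^{n+1}$) be the number $x_{KL}$ associated with $\varphi=\varphi_\rho$, $x_K=\rho_K^{n+1}$, $x_L=\rho_L^{n+1}$ (resp. $\varphi=\varphi_e$, $x_K=e_K^{n+1}$, $x_L=e_L^{n+1}$). Assume that for all $\sigma=K|L\in\mathcal{E}_{\rm int}$ and $0\le n\le N-1$: $\rho_\sigma^{n+1}\in|\hspace{-0.12em}[\rho_K^{n+1},\rho_{KL}^{n+1}]\hspace{-0.12em}|$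 and $e_\sigma^{n+1}\in|\hspace{-0.12em}[e_K^{n+1},e_{KL}^{n+1}]\hspace{-0.12em}|$ if $u_{K,\sigma}^{n+1}\ge0$, and $\rho_\sigma^{n+1}\in|\hspace{-0.12em}[\rho_L^{n+1},\rho_{KL}^{n+1}]\hspace{-0.12em}|$, $e_\sigma^{n+1}\in|\hspace{-0.12em}[e_L^{n+1},e_{KL}^{n+1}]\hspace{-0.12em}|$ otherwise. Define, for $\sigma=K|L$, \[ (\delta\varphi_\rho)_\sigma^{n+1}=\varphi_\rho(\rho_K^{n+1})-\varphi_\rho(\rho_\sigma^{n+1})+\varphi_\rho'(\rho_K^{n+1})[\rho_{KL}^{n+1}-\rho_K^{n+1}]+\tfrac12[\varphi_\rho'(\rho_K^{n+1})+\varphi_\rho'(\rho_L^{n+1})][\rho_\sigma^{n+1}-\rho_{KL}^{n+1}], \] and $(\delta\varphi_e)_\sigma^{n+1}$ by the same formula with $\varphi_\rho,\rho$ replaced by $\varphi_e,e$ (both depend only on $\sigma$), and \[ |K|(\delta R_\eta)_K^{n+1}=\sum_{\sigma\in\mathcal{E}(K)\cap\mathcal{E}_{\rm int}}|\sigma|\,(\delta\varphi_\rho)_\sigma^{n+1}u_{K,\sigma}^{n+1}+\sum_{\sigma\in\mathcal{E}(K)\cap\mathcal{E}_{\rm int}}(\delta\varphi_e)_\sigma^{n+1}F_{K,\sigma}^{n+1}. \] Then for all $K\in\mathcal M$, $0\le n\le N-1$, \[ \frac{|K|}{\delta t}(\eta_K^{n+1}-\eta_K^n)+\sum_{\sigma\in\mathcal{E}(K)}|\sigma|\,\eta_\sigma^{n+1}u_{K,\sigma}^{n+1}+|K|(\delta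 R_\eta)_K^{n+1}\le0, \] where $\eta_K^m=\varphi_\rho(\rho_K^m)+\rho_K^m\varphi_e(e_K^m)$ and $\eta_\sigma^{n+1}=\varphi_\rho(\rho_\sigma^{n+1})+\rho_\sigma^{n+1}\varphi_e(e_\sigma^{n+1})$; the remainder $\delta R_\eta$ is conservative and, for $0\le n\le N-1$, \[ \sum_{K\in\mathcal M}|K|\,\eta_K^{n+1}\le\sum_{K\in\mathcal M}|K|\,\eta_K^n. \] Moreover, if $M>1$ is such that $\rho_K^n\le M$, $1/\rho_K^n\le M$, $e_K^n\le M$, $1/e_K^n\le M$ and $|u_{K,\sigma}^n|\le M$ for all $K$, $\sigma\in\mathcal E(K)$, $0\le n\le N$, and $|\varphi_\rho'|_\infty=\max(|\varphi_\rho'(1/M)|,|\varphi_\rho'(M)|)$, $|\varphi_e'|_\infty=\max(|\varphi_e'(1/M)|,|\varphi_e'(M)|)$, then \[ \|\delta R_\eta\|_{-1,1}\le 3M\bigl(|\varphi_\rho'|_\infty\|\rho\|_{x,BV}+M|\varphi_e'|_\infty\|e\|_{x,BV}\bigr)h_{\mathcal M}. \]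
   Context: Setting: $\Omega\subset\mathbb{R}^d$ bounded; $\mathcal{M}$ a regular polytopal mesh of $\Omega$ with faces $\mathcal{E}$, faces of $K$ denoted $\mathcal{E}(K)$, interior faces $\mathcal{E}_{\rm int}$, boundary faces $\mathcal{E}_{\rm ext}$; $\sigma=K|L$ denotes the interior face between $K$ and $L$; $|K|$, $|\sigma|$ are the measures; ${\boldsymbol x}_K$ is the mass center of $K$; $h_{\mathcal M}=\max_K{\rm diam}(K)$. Uniform time grid $t_n=n\,\delta t$, $0\le n\le N$, $t_N=T$. Normal velocities satisfy $u_{L,\sigma}^n=-u_{K,\sigma}^n$ for $\sigma=K|L$ and $u_{K,\sigma}^n=0$ for $\sigma\in\mathcal{E}_{\rm ext}$ (so boundary face terms vanish); face values depend only on the face. $|\hspace{-0.12em}[a,b]\hspace{-0.12em}|=[\min(a,b),\max(a,b)]$. The number $x_{KL}$: for a strictly convex $C^1$ function $\varphi$ and $x_K,x_L$ in its domain, $x_{KL}$ is the unique number in $|\hspace{-0.12em}[x_K,x_L]\hspace{-0.12em}|$ with $\varphi(x_K)+\varphi'(x_K)(x_{KL}-x_K)=\varphi(x_L)+\varphi'(x_L)(x_{KL}-x_L)$ if $x_K\ne x_L$, and $x_{KL}=x_K$ otherwise. Norms: $\|z\|_{x,BV}=\sum_n\delta t\sum_{\sigma=K|L\in\mathcal{E}_{\rm int}}|\sigma||z_L^n-z_K^n|$; $\|z\|_{-1,1}=\sup_{\psi}\bigl(\sup_{{\boldsymbol x},t}|\nabla\psi({\boldsymbol x},t)|\bigr)^{-1}\sum_n\delta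 t\sum_K|K|z_K^n\psi({\boldsymbol x}_K,t_n)$, supremum over $\psi\in C^\infty_c([0,T)\times\bar\Omega)$ with nonzero gradient, sums over $n$ over the indices where $z$ is defined. *)

theory Defs
  imports "HOL-Analysis.Analysis"
begin

definition polytopal_mesh ::
  "'a::euclidean_space set \<Rightarrow> 'a set set \<Rightarrow> 'a set set \<Rightarrow> ('a set \<Rightarrow> 'a set set) \<Rightarrow> bool" where
  "polytopal_mesh \<Omega> M E EK \<longleftrightarrow>
     bounded \<Omega> \<and> open \<Omega> \<and> finite M \<and> M \<noteq> {} \<and>
     (\<forall>K\<in>M. (\<exists>P. polytope P \<and> K = interior P) \<and> K \<noteq> {} \<and> K \<subseteq> \<Omega>) \<and>
     pairwise disjnt M \<and> closure \<Omega> = \<Union> (closure ` M) \<and>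
     E = \<Union> (EK ` M) \<and> finite E \<and>
     (\<forall>K\<in>M. finite (EK K) \<and> frontier K = \<Union> (EK K)) \<and>
     (\<forall>K\<in>M. \<forall>\<sigma>\<in>EK K. \<sigma> \<subseteq> frontier K \<and> convex \<sigma> \<and> closed \<sigma> \<and>
        aff_dim \<sigma> = int DIM('a) - 1) \<and>
     (\<forall>\<sigma>\<in>E. card {K\<in>M. \<sigma> \<in> EK K} \<le> 2) \<and>
     (\<forall>\<sigma>\<in>E. card {K\<in>M. \<sigma> \<in> EK K} = 1 \<longrightarrow> \<sigma> \<subseteq> frontier \<Omega>)"

definition int_faces :: "'a set set \<Rightarrow> ('a set \<Rightarrow> 'a set set) \<Rightarrow> 'a set set \<Rightarrow> 'a set set" where
  "int_faces M EK E = {\<sigma>\<in>E. card {K\<in>M. \<sigma> \<in> EK K} = 2}"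

definition ext_faces :: "'a set set \<Rightarrow> ('a set \<Rightarrow> 'a set set) \<Rightarrow> 'a set set \<Rightarrow> 'a set set" where
  "ext_faces M EK E = E - int_faces M EK E"

definition nb :: "'a set set \<Rightarrow> ('a set \<Rightarrow> 'a set set) \<Rightarrow> 'a set \<Rightarrow> 'a set \<Rightarrow> 'a set" where
  "nb M EK K \<sigma> = (THE L. L \<in> M \<and> L \<noteq> K \<and> \<sigma> \<in> EK L)"

text \<open>Some cell K having sigma as a face (so that sigma = K|(nb K sigma) for interior faces).\<close>
definition some_cell :: "'a set set \<Rightarrow> ('a set \<Rightarrow> 'a set set) \<Rightarrow> 'a set \<Rightarrow> 'a set" where
  "some_cell M EK \<sigma> = (SOME K. K \<in> M \<and> \<sigma> \<in> EK K)"

definition mass_center :: "'a::euclidean_space set \<Rightarrow> 'a" where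
  "mass_center K = (1 / measure lebesgue K) *\<^sub>R integral K (\<lambda>x. x)"

definition mesh_size :: "'a::euclidean_space set set \<Rightarrow> real" where
  "mesh_size M = Max (diameter ` M)"

definition phi_rho :: "real \<Rightarrow> real" where
  "phi_rho z = z * ln z"

definition phi_e :: "real \<Rightarrow> real \<Rightarrow> real" where
  "phi_e \<gamma> z = - (1 / (\<gamma> - 1)) * ln z"

definition eta :: "real \<Rightarrow> real \<Rightarrow> real \<Rightarrow> real" where
  "eta \<gamma> r e = phi_rho r + r * phi_e \<gamma> e"

definition between :: "real \<Rightarrow> real \<Rightarrow> real \<Rightarrow> bool" where
  "between x a b \<longleftrightarrow> min a b \<le> x \<and> x \<le> max a b"

definition xKL :: "(real \<Rightarrow> real) \<Rightarrow> real \<Rightarrow> real \<Rightarrow> real" where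
  "xKL \<phi> a b = (if a = b then a else
     (THE x. between x a b \<and> \<phi> a + deriv \<phi> a * (x - a) = \<phi> b + deriv \<phi> b * (x - b)))"

definition dphi :: "(real \<Rightarrow> real) \<Rightarrow> real \<Rightarrow> real \<Rightarrow> real \<Rightarrow> real" where
  "dphi \<phi> a b s = \<phi> a - \<phi> s + deriv \<phi> a * (xKL \<phi> a b - a)
      + 1/2 * (deriv \<phi> a + deriv \<phi> b) * (s - xKL \<phi> a b)"

definition dR_flux ::
  "real \<Rightarrow> 'a set set \<Rightarrow> ('a set \<Rightarrow> 'a set set) \<Rightarrow> ('a set \<Rightarrow> real) \<Rightarrow>
   (nat \<Rightarrow> 'a set \<Rightarrow> real) \<Rightarrow> (nat \<Rightarrow> 'a set \<Rightarrow> real) \<Rightarrow>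
   (nat \<Rightarrow> 'a set \<Rightarrow> real) \<Rightarrow> (nat \<Rightarrow> 'a set \<Rightarrow> real) \<Rightarrow>
   (nat \<Rightarrow> 'a set \<Rightarrow> 'a set \<Rightarrow> real) \<Rightarrow> nat \<Rightarrow> 'a set \<Rightarrow> 'a set \<Rightarrow> real" where
  "dR_flux \<gamma> M EK area rho rhof e ef u n K \<sigma> =
     (let L = nb M EK K \<sigma> in
       area \<sigma> * dphi phi_rho (rho n K) (rho n L) (rhof n \<sigma>) * u n K \<sigma>
       + dphi (phi_e \<gamma>) (e n K) (e n L) (ef n \<sigma>) * (area \<sigma> * rhof n \<sigma> * u n K \<sigma>))"

definition dR ::
  "real \<Rightarrow> 'a::euclidean_space set set \<Rightarrow> 'a set set \<Rightarrow> ('a set \<Rightarrow> 'a set set) \<Rightarrow> ('a set \<Rightarrow> real) \<Rightarrow>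
   (nat \<Rightarrow> 'a set \<Rightarrow> real) \<Rightarrow> (nat \<Rightarrow> 'a set \<Rightarrow> real) \<Rightarrow>
   (nat \<Rightarrow> 'a set \<Rightarrow> real) \<Rightarrow> (nat \<Rightarrow> 'a set \<Rightarrow> real) \<Rightarrow>
   (nat \<Rightarrow> 'a set \<Rightarrow> 'a set \<Rightarrow> real) \<Rightarrow> nat \<Rightarrow> 'a set \<Rightarrow> real" where
  "dR \<gamma> M E EK area rho rhof e ef u n K =
     (1 / measure lebesgue K) *
       (\<Sum>\<sigma>\<in>EK K \<inter> int_faces M EK E. dR_flux \<gamma> M EK area rho rhof e ef u n K \<sigma>)"

fun iter_dd :: "'a::real_normed_vector list \<Rightarrow> ('a \<Rightarrow> real) \<Rightarrow> 'a \<Rightarrow> real" where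
  "iter_dd [] f = f"
| "iter_dd (v # vs) f = (\<lambda>x. frechet_derivative (iter_dd vs f) (at x) v)"

definition smooth_fun :: "('a::real_normed_vector \<Rightarrow> real) \<Rightarrow> bool" where
  "smooth_fun f \<longleftrightarrow> (\<forall>vs x. iter_dd vs f differentiable (at x))"

text \<open>Test functions in C_c^infinity([0,T) x closure Omega), written psi(x,t).\<close>
definition test_fun :: "'a::euclidean_space set \<Rightarrow> real \<Rightarrow> ('a \<times> real \<Rightarrow> real) \<Rightarrow> bool" where
  "test_fun \<Omega> T \<psi> \<longleftrightarrow> smooth_fun \<psi> \<and> (\<exists>T'<T. \<forall>x t. T' \<le> t \<longrightarrow> \<psi> (x, t) = 0)"

definition grad_sup :: "'a::euclidean_space set \<Rightarrow> real \<Rightarrow> ('a \<times> real \<Rightarrow> real) \<Rightarrow> real" where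
  "grad_sup \<Omega> T \<psi> = Sup {onorm (frechet_derivative (\<lambda>y. \<psi> (y, t)) (at x)) | x t.
      x \<in> closure \<Omega> \<and> 0 \<le> t \<and> t < T}"

text \<open>The discrete W^{-1,1}-type norm of z = (z_K^n), n ranging over the index set I.\<close>
definition neg_norm ::
  "'a::euclidean_space set \<Rightarrow> 'a set set \<Rightarrow> real \<Rightarrow> real \<Rightarrow> nat set \<Rightarrow> (nat \<Rightarrow> 'a set \<Rightarrow> real) \<Rightarrow> ereal" where
  "neg_norm \<Omega> M T dt I z =
     (SUP \<psi> \<in> {\<psi>. test_fun \<Omega> T \<psi> \<and> grad_sup \<Omega> T \<psi> \<noteq> 0}.
        ereal ((1 / grad_sup \<Omega> T \<psi>) *
          (\<Sum>n\<in>I. dt * (\<Sum>K\<in>M. measure lebesgue K * z n K * \<psi> (mass_center K, real n * dt)))))"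

text \<open>Discrete space BV seminorm, each interior face sigma = K|L counted once.\<close>
definition bv_norm ::
  "'a set set \<Rightarrow> 'a set set \<Rightarrow> ('a set \<Rightarrow> 'a set set) \<Rightarrow> ('a set \<Rightarrow> real) \<Rightarrow> real \<Rightarrow> nat set \<Rightarrow>
   (nat \<Rightarrow> 'a set \<Rightarrow> real) \<Rightarrow> real" where
  "bv_norm M E EK area dt I z =
     (\<Sum>n\<in>I. dt * (\<Sum>\<sigma>\<in>int_faces M EK E.
        area \<sigma> * \<bar>z n (nb M EK (some_cell M EK \<sigma>) \<sigma>) - z n (some_cell M EK \<sigma>)\<bar>))"

end

theory Submission
  imports Defs
begin

text \<open>
  Multiply the mass balance of a cell K by phi_rho'(rho_K) + phi_e(e_K) - e_K phi_e'(e_K) and the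
  internal energy balance by phi_e'(e_K) < 0 (the equation of state turns the pressure work into
  rho_K times the velocity divergence). The tangent inequalities of the convex functions phi_rho and
  phi_e at the new time level then bound the entropy change of K by a sum of face terms. On an
  interior face sigma = K|L, this term plus the entropy flux and the remainder is exactly
  1/2 u_{K,sigma} (phi'(x_L) - phi'(x_K)) (x_sigma - x_KL) for both unknowns, which is nonpositive
  because the face values are upwinded towards x_KL; boundary faces carry no flux.

  The remainder depends only on the face, up to the orientation of u, so it is conservative and the
  total entropy decreases. Testing it against psi, conservativity turns the sum over cells into a sum
  over faces of the flux times the difference of psi between two neighbouring mass centres, which is
  at most 2 h |grad psi|; convexity bounds |(delta phi)_sigma| by
  3/4 |phi'(x_L) - phi'(x_K)| |x_L - x_K|.
\<close>

section \<open>Mesh combinatorics\<close>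

lemma polytopal_meshD:
  fixes \<Omega> :: "'a::euclidean_space set"
  assumes "polytopal_mesh \<Omega> M E EK"
  shows "bounded \<Omega>" "finite M"
    "\<forall>K\<in>M. (\<exists>P. polytope P \<and> K = interior P) \<and> K \<noteq> {} \<and> K \<subseteq> \<Omega>"
    "E = \<Union> (EK ` M)" "finite E"
    "\<forall>K\<in>M. finite (EK K) \<and> frontier K = \<Union> (EK K)"
    "\<forall>K\<in>M. \<forall>\<sigma>\<in>EK K. \<sigma> \<subseteq> frontier K \<and> convex \<sigma> \<and> closed \<sigma> \<and> aff_dim \<sigma> = int DIM('a) - 1"
    "\<forall>\<sigma>\<in>E. card {K\<in>M. \<sigma> \<in> EK K} \<le> 2"
  using assms unfolding polytopal_mesh_def apply - by (elim conjE; assumption)+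

lemma mesh_cell:
  fixes \<Omega> :: "'a::euclidean_space set"
  assumes mesh: "polytopal_mesh \<Omega> M E EK" and K: "K \<in> M"
  shows "open K" "bounded K" "convex K" "K \<noteq> {}" "K \<subseteq> \<Omega>" "K \<in> lmeasurable"
    "measure lebesgue K > 0"
proof -
  have "(\<exists>P. polytope P \<and> K = interior P) \<and> K \<noteq> {} \<and> K \<subseteq> \<Omega>"
    using bspec[OF polytopal_meshD(3)[OF mesh] K] .
  then obtain P where P: "polytope P" "K = interior P" and ne: "K \<noteq> {}" and sub: "K \<subseteq> \<Omega>"
    by blast
  show "open K" using P by simp
  show bK: "bounded K" using P polytope_imp_bounded bounded_interior by blast
  show "convex K" using P polytope_imp_convex convex_interior by blast
  show "K \<noteq> {}" "K \<subseteq> \<Omega>" using ne sub by auto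
  show lm: "K \<in> lmeasurable" using bK \<open>open K\<close> lmeasurable_open by blast
  obtain x where "x \<in> K" using ne by blast
  then obtain r where r: "r > 0" "ball x r \<subseteq> K" using \<open>open K\<close> open_contains_ball by blast
  have "0 < measure lborel (ball x r)" using content_ball_pos[OF r(1)] .
  also have "\<dots> = measure lebesgue (ball x r)" by (simp add: measure_completion)
  also have "\<dots> \<le> measure lebesgue K"
    using measure_mono_fmeasurable[OF r(2) fmeasurableD[OF lmeasurable_ball] lm] .
  finally show "measure lebesgue K > 0" .
qed

lemma polytopal_mesh_nonempty:
  fixes \<Omega> :: "'a::euclidean_space set"
  assumes mesh: "polytopal_mesh \<Omega> M E EK"
  shows "M \<noteq> {}" "\<Omega> \<noteq> {}"
proof -
  show "M \<noteq> {}" using mesh unfolding polytopal_mesh_def by (elim conjE)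
  then obtain K where "K \<in> M" by blast
  then show "\<Omega> \<noteq> {}" using mesh_cell(4,5)[OF mesh] by blast
qed

lemma mesh_face:
  fixes \<Omega> :: "'a::euclidean_space set"
  assumes mesh: "polytopal_mesh \<Omega> M E EK" and K: "K \<in> M" and \<sigma>K: "\<sigma> \<in> EK K"
  shows "\<sigma> \<noteq> {}" "\<sigma> \<subseteq> closure K" "\<sigma> \<in> E"
proof -
  have a: "aff_dim \<sigma> = int DIM('a) - 1" "\<sigma> \<subseteq> frontier K" using polytopal_meshD(7)[OF mesh] K \<sigma>K by auto
  have "DIM('a) \<ge> 1" using DIM_positive by (simp add: Suc_le_eq)
  then show "\<sigma> \<noteq> {}" using a by auto
  show "\<sigma> \<subseteq> closure K" using a frontier_def by auto
  show "\<sigma> \<in> E" using polytopal_meshD(4)[OF mesh] K \<sigma>K by auto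
qed

lemma shared_face:
  fixes \<Omega> :: "'a::euclidean_space set"
  assumes mesh: "polytopal_mesh \<Omega> M E EK" and K: "K \<in> M" and L: "L \<in> M" and KL: "K \<noteq> L"
    and \<sigma>K: "\<sigma> \<in> EK K" and \<sigma>L: "\<sigma> \<in> EK L"
  shows "{K'\<in>M. \<sigma> \<in> EK K'} = {K, L}" "nb M EK K \<sigma> = L" "\<sigma> \<in> int_faces M EK E"
proof -
  have \<sigma>E: "\<sigma> \<in> E" using mesh_face[OF mesh K \<sigma>K] by auto
  have fin: "finite {K'\<in>M. \<sigma> \<in> EK K'}" using polytopal_meshD(2)[OF mesh] by auto
  have c2: "card {K'\<in>M. \<sigma> \<in> EK K'} \<le> 2" using polytopal_meshD(8)[OF mesh] \<sigma>E by auto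
  have sub: "{K, L} \<subseteq> {K'\<in>M. \<sigma> \<in> EK K'}" using K L \<sigma>K \<sigma>L by auto
  have cKL: "card {K, L} = 2" using KL by auto
  show eq: "{K'\<in>M. \<sigma> \<in> EK K'} = {K, L}"
  proof -
    have "card {K, L} = card {K'\<in>M. \<sigma> \<in> EK K'}" using c2 cKL card_mono[OF fin sub] by linarith
    then show ?thesis using card_subset_eq[OF fin sub] by simp
  qed
  show "nb M EK K \<sigma> = L" unfolding nb_def
  proof (rule the_equality)
    show "L \<in> M \<and> L \<noteq> K \<and> \<sigma> \<in> EK L" using L KL \<sigma>L by auto
    fix L' assume "L' \<in> M \<and> L' \<noteq> K \<and> \<sigma> \<in> EK L'"
    then have "L' \<in> {K'\<in>M. \<sigma> \<in> EK K'}" "L' \<noteq> K" by auto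
    then show "L' = L" using eq by auto
  qed
  show "\<sigma> \<in> int_faces M EK E" unfolding int_faces_def using \<sigma>E eq cKL by auto
qed

lemma int_face_cells:
  fixes \<Omega> :: "'a::euclidean_space set"
  assumes mesh: "polytopal_mesh \<Omega> M E EK" and \<sigma>: "\<sigma> \<in> int_faces M EK E"
  defines "K \<equiv> some_cell M EK \<sigma>"
  shows "K \<in> M" "\<sigma> \<in> EK K" "nb M EK K \<sigma> \<in> M" "nb M EK K \<sigma> \<noteq> K" "\<sigma> \<in> EK (nb M EK K \<sigma>)"
proof -
  have "card {K\<in>M. \<sigma> \<in> EK K} = 2" using \<sigma> unfolding int_faces_def by auto
  then obtain a b where ab: "{K\<in>M. \<sigma> \<in> EK K} = {a, b}" "a \<noteq> b" by (meson card_2_iff)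
  then have "\<exists>K. K \<in> M \<and> \<sigma> \<in> EK K" by blast
  then have "K \<in> M \<and> \<sigma> \<in> EK K" unfolding K_def some_cell_def by (rule someI_ex)
  then show K: "K \<in> M" "\<sigma> \<in> EK K" by auto
  obtain L where "L \<in> {a, b}" "L \<noteq> K" using ab(2) by blast
  then have L: "L \<in> M" "\<sigma> \<in> EK L" "L \<noteq> K" using ab(1) by auto
  then have "nb M EK K \<sigma> = L" using shared_face(2)[OF mesh K(1) L(1) _ K(2) L(2)] by auto
  then show "nb M EK K \<sigma> \<in> M" "nb M EK K \<sigma> \<noteq> K" "\<sigma> \<in> EK (nb M EK K \<sigma>)" using L by auto
qed

lemma int_face_nb:
  fixes \<Omega> :: "'a::euclidean_space set"
  assumes mesh: "polytopal_mesh \<Omega> M E EK" and K: "K \<in> M" and \<sigma>K: "\<sigma> \<in> EK K"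
    and \<sigma>: "\<sigma> \<in> int_faces M EK E"
  shows "nb M EK K \<sigma> \<in> M" "nb M EK K \<sigma> \<noteq> K" "\<sigma> \<in> EK (nb M EK K \<sigma>)"
proof -
  define K0 where "K0 = some_cell M EK \<sigma>"
  define L0 where "L0 = nb M EK K0 \<sigma>"
  note c = int_face_cells[OF mesh \<sigma>, folded K0_def, folded L0_def]
  have "K \<in> {K'\<in>M. \<sigma> \<in> EK K'}" using K \<sigma>K by simp
  then have "K = K0 \<or> K = L0"
    unfolding shared_face(1)[OF mesh c(1,3) c(4)[symmetric] c(2,5)] by simp
  moreover have "nb M EK L0 \<sigma> = K0" using shared_face(2)[OF mesh c(3,1,4,5,2)] .
  ultimately have "nb M EK K \<sigma> = L0 \<and> K = K0 \<or> nb M EK K \<sigma> = K0 \<and> K = L0"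
    unfolding L0_def by blast
  then show "nb M EK K \<sigma> \<in> M" "nb M EK K \<sigma> \<noteq> K" "\<sigma> \<in> EK (nb M EK K \<sigma>)"
    using c by auto
qed

lemma sum_cells_int_faces:
  fixes \<Omega> :: "'a::euclidean_space set" and h :: "'a set \<Rightarrow> 'a set \<Rightarrow> 'b::comm_monoid_add"
  assumes mesh: "polytopal_mesh \<Omega> M E EK"
  shows "(\<Sum>K\<in>M. \<Sum>\<sigma>\<in>EK K \<inter> int_faces M EK E. h K \<sigma>)
       = (\<Sum>\<sigma>\<in>int_faces M EK E. h (some_cell M EK \<sigma>) \<sigma> + h (nb M EK (some_cell M EK \<sigma>) \<sigma>) \<sigma>)"
proof -
  let ?I = "int_faces M EK E"
  have fI: "finite ?I"
    using polytopal_meshD(5)[OF mesh] by (rule finite_subset[rotated]) (auto simp: int_faces_def)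
  have "(\<Sum>K\<in>M. \<Sum>\<sigma>\<in>EK K \<inter> ?I. h K \<sigma>) = (\<Sum>K\<in>M. \<Sum>\<sigma>\<in>{\<sigma>\<in>?I. \<sigma> \<in> EK K}. h K \<sigma>)"
    by (intro sum.cong refl) (simp add: Int_def conj_commute)
  also have "\<dots> = (\<Sum>\<sigma>\<in>?I. \<Sum>K | K \<in> M \<and> \<sigma> \<in> EK K. h K \<sigma>)"
    by (rule sum.swap_restrict[OF polytopal_meshD(2)[OF mesh] fI])
  also have "\<dots> = (\<Sum>\<sigma>\<in>?I. h (some_cell M EK \<sigma>) \<sigma> + h (nb M EK (some_cell M EK \<sigma>) \<sigma>) \<sigma>)"
  proof (rule sum.cong[OF refl])
    fix \<sigma> assume "\<sigma> \<in> ?I"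
    note c = int_face_cells[OF mesh this]
    have "{K. K \<in> M \<and> \<sigma> \<in> EK K} = {some_cell M EK \<sigma>, nb M EK (some_cell M EK \<sigma>) \<sigma>}"
      using shared_face(1)[OF mesh c(1,3) c(4)[symmetric] c(2,5)] by simp
    then show "(\<Sum>K | K \<in> M \<and> \<sigma> \<in> EK K. h K \<sigma>)
        = h (some_cell M EK \<sigma>) \<sigma> + h (nb M EK (some_cell M EK \<sigma>) \<sigma>) \<sigma>"
      using c(4) by simp
  qed
  finally show ?thesis .
qed

lemma sum_cells_int_faces_antisym:
  fixes \<Omega> :: "'a::euclidean_space set" and h :: "'a set \<Rightarrow> 'a set \<Rightarrow> 'b::ab_group_add"
  assumes mesh: "polytopal_mesh \<Omega> M E EK"
    and antisym: "\<And>K L \<sigma>. K \<in> M \<Longrightarrow> L \<in> M \<Longrightarrow> K \<noteq> L \<Longrightarrow> \<sigma> \<in> EK K \<Longrightarrow> \<sigma> \<in> EK L \<Longrightarrow>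
                   h L \<sigma> = - h K \<sigma>"
  shows "(\<Sum>K\<in>M. \<Sum>\<sigma>\<in>EK K \<inter> int_faces M EK E. h K \<sigma>) = 0"
  unfolding sum_cells_int_faces[OF mesh]
proof (rule sum.neutral, rule ballI)
  fix \<sigma> assume "\<sigma> \<in> int_faces M EK E"
  note c = int_face_cells[OF mesh this]
  show "h (some_cell M EK \<sigma>) \<sigma> + h (nb M EK (some_cell M EK \<sigma>) \<sigma>) \<sigma> = 0"
    using antisym[OF c(1,3) c(4)[symmetric] c(2,5)] by simp
qed

lemma sum_cells_faces_antisym:
  fixes \<Omega> :: "'a::euclidean_space set" and h :: "'a set \<Rightarrow> 'a set \<Rightarrow> 'b::ab_group_add"
  assumes mesh: "polytopal_mesh \<Omega> M E EK"
    and antisym: "\<And>K L \<sigma>. K \<in> M \<Longrightarrow> L \<in> M \<Longrightarrow> K \<noteq> L \<Longrightarrow> \<sigma> \<in> EK K \<Longrightarrow> \<sigma> \<in> EK L \<Longrightarrow>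
                   h L \<sigma> = - h K \<sigma>"
    and ext: "\<And>K \<sigma>. K \<in> M \<Longrightarrow> \<sigma> \<in> EK K \<Longrightarrow> \<sigma> \<notin> int_faces M EK E \<Longrightarrow> h K \<sigma> = 0"
  shows "(\<Sum>K\<in>M. \<Sum>\<sigma>\<in>EK K. h K \<sigma>) = 0"
proof -
  have "(\<Sum>K\<in>M. \<Sum>\<sigma>\<in>EK K. h K \<sigma>) = (\<Sum>K\<in>M. \<Sum>\<sigma>\<in>EK K \<inter> int_faces M EK E. h K \<sigma>)"
  proof (rule sum.cong[OF refl])
    fix K assume K: "K \<in> M"
    then have "finite (EK K)" using polytopal_meshD(6)[OF mesh] by auto
    then show "(\<Sum>\<sigma>\<in>EK K. h K \<sigma>) = (\<Sum>\<sigma>\<in>EK K \<inter> int_faces M EK E. h K \<sigma>)"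
      by (rule sum.mono_neutral_right) (auto intro: ext[OF K])
  qed
  also have "\<dots> = 0" by (rule sum_cells_int_faces_antisym[OF mesh antisym])
  finally show ?thesis .
qed

section \<open>Geometry of cells and test functions\<close>

lemma dist_le_mesh_size:
  fixes \<Omega> :: "'a::euclidean_space set"
  assumes mesh: "polytopal_mesh \<Omega> M E EK" and K: "K \<in> M" and "x \<in> closure K" "y \<in> closure K"
  shows "dist x y \<le> mesh_size M"
proof -
  have "bounded K" using mesh_cell[OF mesh K] by simp
  then have "dist x y \<le> diameter (closure K)"
    using assms(3,4) by (intro diameter_bounded_bound) auto
  also have "\<dots> = diameter K" using \<open>bounded K\<close> by (rule diameter_closure)
  also have "\<dots> \<le> mesh_size M"
    unfolding mesh_size_def using polytopal_meshD(2)[OF mesh] K by (intro Max_ge) auto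
  finally show ?thesis .
qed

lemma mesh_size_nonneg:
  fixes \<Omega> :: "'a::euclidean_space set"
  assumes mesh: "polytopal_mesh \<Omega> M E EK"
  shows "0 \<le> mesh_size M"
proof -
  obtain K where K: "K \<in> M" using polytopal_mesh_nonempty(1)[OF mesh] by blast
  then obtain x where "x \<in> closure K" using mesh_cell(4)[OF mesh K] closure_subset by blast
  then show ?thesis using dist_le_mesh_size[OF mesh K] by fastforce
qed

lemma mass_center_in_closure:
  fixes K :: "'a::euclidean_space set"
  assumes bK: "bounded K" and cK: "convex K" and lm: "K \<in> lmeasurable"
    and pos: "measure lebesgue K > 0"
  shows "mass_center K \<in> closure K"
proof (rule ccontr)
  assume "mass_center K \<notin> closure K"
  then obtain a b where ab: "a \<bullet> mass_center K < b" "\<forall>x\<in>closure K. b < a \<bullet> x"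
    using separating_hyperplane_closed_point[OF convex_closure[OF cK] closed_closure] by blast
  obtain B where B: "\<forall>x\<in>K. norm x \<le> B" using bK bounded_pos by blast
  have int_id: "(\<lambda>x. x) integrable_on K"
  proof (rule measurable_bounded_by_integrable_imp_integrable[where g = "\<lambda>x. B"])
    show "(\<lambda>x. x) \<in> borel_measurable (lebesgue_on K)"
      using continuous_imp_measurable_on_sets_lebesgue[OF continuous_on_id fmeasurableD[OF lm]] by simp
  qed (use B integrable_on_const[OF lm] fmeasurableD[OF lm] in auto)
  have "integral K (\<lambda>x. b * 1) = b * integral K (\<lambda>x. 1::real)" by (rule integral_mult_right)
  then have "b * measure lebesgue K = integral K (\<lambda>x. b)" using lmeasure_integral[OF lm] by simp
  also have "\<dots> \<le> integral K (\<lambda>x. x \<bullet> a)"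
  proof (rule integral_le[OF integrable_on_const[OF lm] integrable_component[OF int_id]])
    fix x assume "x \<in> K"
    then have "b < a \<bullet> x" using ab(2) closure_subset by blast
    then show "b \<le> x \<bullet> a" by (simp add: inner_commute)
  qed
  also have "\<dots> = measure lebesgue K * (a \<bullet> mass_center K)"
    using pos by (simp add: mass_center_def integral_component_eq[OF int_id] inner_commute)
  finally have "b \<le> a \<bullet> mass_center K" using pos by (simp add: mult.commute)
  then show False using ab(1) by simp
qed

lemma has_derivative_slice:
  fixes \<psi> :: "'a::real_normed_vector \<times> 'b::real_normed_vector \<Rightarrow> real"
  assumes "\<psi> differentiable (at (x, t))"
  shows "((\<lambda>y. \<psi> (y, t)) has_derivative (\<lambda>h. frechet_derivative \<psi> (at (x, t)) (h, 0))) (at x)"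
  using has_derivative_compose[OF has_derivative_Pair[OF has_derivative_ident has_derivative_const]
      assms[unfolded frechet_derivative_works]]
  by simp

lemma onorm_slice_le:
  fixes D :: "'a::euclidean_space \<times> real \<Rightarrow> real"
  assumes bl: "bounded_linear D"
  shows "onorm (\<lambda>h. D (h, 0)) \<le> (\<Sum>b\<in>Basis. \<bar>D (b, 0)\<bar>)"
proof (rule onorm_le)
  fix h :: 'a
  interpret L: bounded_linear "\<lambda>h::'a. D (h, 0)"
    using bounded_linear_compose[OF bl bounded_linear_Pair[OF bounded_linear_ident bounded_linear_zero]]
    by (simp add: o_def)
  have "D (h, 0) = D ((\<Sum>b\<in>Basis. (h \<bullet> b) *\<^sub>R b), 0)" by (simp only: euclidean_representation)
  also have "\<dots> = (\<Sum>b\<in>Basis. (h \<bullet> b) * D (b, 0))" by (simp add: L.sum L.scale)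
  finally have "D (h, 0) = (\<Sum>b\<in>Basis. (h \<bullet> b) * D (b, 0))" .
  then have "\<bar>D (h, 0)\<bar> \<le> (\<Sum>b\<in>Basis. \<bar>h \<bullet> b\<bar> * \<bar>D (b, 0)\<bar>)"
    by (simp add: sum_abs[THEN order_trans] abs_mult)
  also have "\<dots> \<le> (\<Sum>b\<in>Basis. norm h * \<bar>D (b, 0)\<bar>)"
    by (intro sum_mono mult_right_mono Basis_le_norm) auto
  finally show "norm (D (h, 0)) \<le> (\<Sum>b\<in>Basis. \<bar>D (b, 0)\<bar>) * norm h"
    by (simp add: sum_distrib_left mult.commute)
qed

lemma smooth_fun_differentiable: "smooth_fun f \<Longrightarrow> f differentiable (at x)"
  unfolding smooth_fun_def using iter_dd.simps(1)[of f] by metis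

lemma smooth_fun_derivative_differentiable:
  "smooth_fun f \<Longrightarrow> (\<lambda>z. frechet_derivative f (at z) v) differentiable (at x)"
  unfolding smooth_fun_def using iter_dd.simps(2)[of v "[]" f] iter_dd.simps(1)[of f] by metis

lemma smooth_fun_slice_derivative:
  fixes \<psi> :: "'a::real_normed_vector \<times> 'b::real_normed_vector \<Rightarrow> real"
  assumes "smooth_fun \<psi>"
  shows "frechet_derivative (\<lambda>y. \<psi> (y, t)) (at x) = (\<lambda>h. frechet_derivative \<psi> (at (x, t)) (h, 0))"
  using frechet_derivative_at[OF has_derivative_slice[OF smooth_fun_differentiable[OF assms]]] by simp

lemma onorm_slice_le_grad_sup:
  fixes \<psi> :: "'a::euclidean_space \<times> real \<Rightarrow> real"
  assumes sm: "smooth_fun \<psi>" and b\<Omega>: "bounded \<Omega>" and x: "x \<in> closure \<Omega>" and t: "0 \<le> t" "t < T"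
  shows "onorm (frechet_derivative (\<lambda>y. \<psi> (y, t)) (at x)) \<le> grad_sup \<Omega> T \<psi>"
proof -
  define C where "C = closure \<Omega> \<times> {0..T}"
  define g where "g z = (\<Sum>b\<in>Basis. \<bar>frechet_derivative \<psi> (at z) (b, 0)\<bar>)" for z
  have slice_le_g: "onorm (frechet_derivative (\<lambda>y. \<psi> (y, t)) (at x)) \<le> g (x, t)" for x t
    unfolding smooth_fun_slice_derivative[OF sm] g_def
    using smooth_fun_differentiable[OF sm, THEN iffD1[OF frechet_derivative_works], THEN has_derivative_bounded_linear]
    by (rule onorm_slice_le)
  have "continuous_on C g"
    unfolding g_def using smooth_fun_derivative_differentiable[OF sm]
    by (intro continuous_intros differentiable_imp_continuous_on)
       (auto simp: differentiable_on_def differentiable_at_withinI)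
  moreover have "compact C" unfolding C_def using b\<Omega> by (intro compact_Times) (auto simp: compact_closure)
  ultimately have "bounded (g ` C)" by (intro compact_imp_bounded compact_continuous_image)
  then obtain B where B: "\<And>z. z \<in> C \<Longrightarrow> norm (g z) \<le> B" unfolding bounded_iff by blast
  have "bdd_above {onorm (frechet_derivative (\<lambda>y. \<psi> (y, t)) (at x)) | x t.
      x \<in> closure \<Omega> \<and> 0 \<le> t \<and> t < T}"
  proof (rule bdd_aboveI, safe)
    fix x t assume "x \<in> closure \<Omega>" "0 \<le> t" "t < T"
    then have "(x, t) \<in> C" unfolding C_def by auto
    then have "g (x, t) \<le> B" using B by fastforce
    then show "onorm (frechet_derivative (\<lambda>y. \<psi> (y, t)) (at x)) \<le> B"
      using slice_le_g order_trans by blast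
  qed
  then show ?thesis unfolding grad_sup_def using x t by (intro cSup_upper) blast+
qed

lemma grad_sup_nonneg:
  fixes \<psi> :: "'a::euclidean_space \<times> real \<Rightarrow> real"
  assumes sm: "smooth_fun \<psi>" and "bounded \<Omega>" "\<Omega> \<noteq> {}" "T > 0"
  shows "0 \<le> grad_sup \<Omega> T \<psi>"
proof -
  obtain x where "x \<in> closure \<Omega>" using assms(3) closure_subset by blast
  have "bounded_linear (frechet_derivative (\<lambda>y. \<psi> (y, 0)) (at x))"
    using has_derivative_slice[OF smooth_fun_differentiable[OF sm]]
    unfolding smooth_fun_slice_derivative[OF sm] by (rule has_derivative_bounded_linear)
  then have "0 \<le> onorm (frechet_derivative (\<lambda>y. \<psi> (y, 0)) (at x))" by (rule onorm_pos_le)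
  also have "\<dots> \<le> grad_sup \<Omega> T \<psi>"
    using onorm_slice_le_grad_sup[OF sm assms(2) \<open>x \<in> closure \<Omega>\<close>] assms(4) by simp
  finally show ?thesis .
qed

lemma test_fun_lipschitz:
  fixes \<psi> :: "'a::euclidean_space \<times> real \<Rightarrow> real"
  assumes tf: "test_fun \<Omega> T \<psi>" and "bounded \<Omega>" "\<Omega> \<noteq> {}" "T > 0"
    and S: "convex S" "S \<subseteq> closure \<Omega>" and xy: "x \<in> S" "y \<in> S" and t: "0 \<le> t"
  shows "\<bar>\<psi> (x, t) - \<psi> (y, t)\<bar> \<le> grad_sup \<Omega> T \<psi> * dist x y"
proof -
  have sm: "smooth_fun \<psi>" using tf unfolding test_fun_def by simp
  obtain T' where T': "T' < T" "\<And>x t. T' \<le> t \<Longrightarrow> \<psi> (x, t) = 0"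
    using tf unfolding test_fun_def by blast
  show ?thesis
  proof (cases "T' \<le> t")
    case True
    then show ?thesis using T'(2) grad_sup_nonneg[OF sm assms(2-4)] by simp
  next
    case False
    have "norm (\<psi> (x, t) - \<psi> (y, t)) \<le> grad_sup \<Omega> T \<psi> * norm (x - y)"
    proof (rule differentiable_bound[OF S(1) _ _ xy, where f = "\<lambda>y. \<psi> (y, t)"])
      fix z assume "z \<in> S"
      show "((\<lambda>y. \<psi> (y, t)) has_derivative frechet_derivative (\<lambda>y. \<psi> (y, t)) (at z)) (at z within S)"
        unfolding smooth_fun_slice_derivative[OF sm]
        by (rule has_derivative_at_withinI[OF has_derivative_slice[OF smooth_fun_differentiable[OF sm]]])
      show "onorm (frechet_derivative (\<lambda>y. \<psi> (y, t)) (at z)) \<le> grad_sup \<Omega> T \<psi>"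
        using onorm_slice_le_grad_sup[OF sm assms(2)] S(2) \<open>z \<in> S\<close> t False T'(1) by auto
    qed
    then show ?thesis by (simp add: dist_norm)
  qed
qed

text \<open>The face separating two cells meets both closures, and both cells have diameter at most h.\<close>

lemma test_fun_neighbour_centres:
  fixes \<Omega> :: "'a::euclidean_space set"
  assumes mesh: "polytopal_mesh \<Omega> M E EK" and tf: "test_fun \<Omega> T \<psi>" and T: "T > 0"
    and K: "K \<in> M" and L: "L \<in> M" and \<sigma>K: "\<sigma> \<in> EK K" and \<sigma>L: "\<sigma> \<in> EK L" and t: "0 \<le> t"
  shows "\<bar>\<psi> (mass_center K, t) - \<psi> (mass_center L, t)\<bar> \<le> 2 * grad_sup \<Omega> T \<psi> * mesh_size M"
proof -
  define G where "G = grad_sup \<Omega> T \<psi>"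
  have \<Omega>: "bounded \<Omega>" "\<Omega> \<noteq> {}" using polytopal_meshD(1)[OF mesh] polytopal_mesh_nonempty(2)[OF mesh] .
  have G: "0 \<le> G" unfolding G_def using tf \<Omega> T by (intro grad_sup_nonneg) (auto simp: test_fun_def)
  have centre_bound: "\<bar>\<psi> (mass_center K', t) - \<psi> (y, t)\<bar> \<le> G * mesh_size M"
    if K': "K' \<in> M" and y: "y \<in> closure K'" for K' y
  proof -
    note c = mesh_cell[OF mesh K']
    have centre: "mass_center K' \<in> closure K'" using mass_center_in_closure c(2,3,6,7) by blast
    have "\<bar>\<psi> (mass_center K', t) - \<psi> (y, t)\<bar> \<le> G * dist (mass_center K') y"
      unfolding G_def using tf \<Omega> T convex_closure[OF c(3)] closure_mono[OF c(5)] centre y t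
      by (rule test_fun_lipschitz)
    also have "\<dots> \<le> G * mesh_size M"
      using dist_le_mesh_size[OF mesh K' centre y] G by (rule mult_left_mono)
    finally show ?thesis .
  qed
  obtain y where "y \<in> \<sigma>" using mesh_face(1)[OF mesh K \<sigma>K] by blast
  then have "y \<in> closure K" "y \<in> closure L" using mesh_face(2)[OF mesh K \<sigma>K] mesh_face(2)[OF mesh L \<sigma>L] by auto
  then show ?thesis
    using centre_bound[OF K] centre_bound[OF L] unfolding G_def abs_le_iff by fastforce
qed

section \<open>Convex entropy functions\<close>

text \<open>What the argument uses of a strictly convex C^1 function on the positive reals.\<close>

definition tangent_convex :: "(real \<Rightarrow> real) \<Rightarrow> bool" where
  "tangent_convex \<phi> \<longleftrightarrow> (\<forall>x y. 0 < x \<longrightarrow> 0 < y \<longrightarrow> \<phi> x + deriv \<phi> x * (y - x) \<le> \<phi> y)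
      \<and> (\<forall>x y. 0 < x \<longrightarrow> x < y \<longrightarrow> deriv \<phi> x < deriv \<phi> y)"

lemma tangent_convex_tangent_le:
  "tangent_convex \<phi> \<Longrightarrow> 0 < x \<Longrightarrow> 0 < y \<Longrightarrow> \<phi> x + deriv \<phi> x * (y - x) \<le> \<phi> y"
  unfolding tangent_convex_def by blast

lemma tangent_convex_deriv_less:
  "tangent_convex \<phi> \<Longrightarrow> 0 < x \<Longrightarrow> x < y \<Longrightarrow> deriv \<phi> x < deriv \<phi> y"
  unfolding tangent_convex_def by blast

lemma tangent_convex_deriv_mono:
  "tangent_convex \<phi> \<Longrightarrow> 0 < x \<Longrightarrow> x \<le> y \<Longrightarrow> deriv \<phi> x \<le> deriv \<phi> y"
  using tangent_convex_deriv_less[of \<phi> x y] by (cases "x = y") auto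

lemma between_commute: "between x a b = between x b a"
  unfolding between_def by (simp add: min.commute max.commute)

lemma xKL_commute: "xKL \<phi> b a = xKL \<phi> a b"
proof (cases "a = b")
  case False
  have "(\<lambda>x. between x b a \<and> \<phi> b + deriv \<phi> b * (x - b) = \<phi> a + deriv \<phi> a * (x - a))
      = (\<lambda>x. between x a b \<and> \<phi> a + deriv \<phi> a * (x - a) = \<phi> b + deriv \<phi> b * (x - b))"
    using between_commute by (intro ext) auto
  then show ?thesis unfolding xKL_def using False by simp
qed simp

lemma xKL_less:
  assumes tc: "tangent_convex \<phi>" and a: "0 < a" and ab: "a < b"
  shows "between (xKL \<phi> a b) a b"
    "\<phi> a + deriv \<phi> a * (xKL \<phi> a b - a) = \<phi> b + deriv \<phi> b * (xKL \<phi> a b - b)"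
proof -
  define da db where "da = deriv \<phi> a" and "db = deriv \<phi> b"
  have b: "0 < b" using a ab by simp
  have slope: "da - db < 0" unfolding da_def db_def using tangent_convex_deriv_less[OF tc a ab] by simp
  define x0 where "x0 = (\<phi> b - \<phi> a + da * a - db * b) / (da - db)"
  have x0: "(da - db) * x0 = \<phi> b - \<phi> a + da * a - db * b" unfolding x0_def using slope by simp
  have "(da - db) * (x0 - a) \<le> 0"
    using x0 tangent_convex_tangent_le[OF tc b a] unfolding da_def db_def by (simp add: algebra_simps)
  then have "a \<le> x0" using slope by (simp add: mult_le_0_iff)
  moreover have "(da - db) * (b - x0) \<le> 0"
    using x0 tangent_convex_tangent_le[OF tc a b] unfolding da_def db_def by (simp add: algebra_simps)
  then have "x0 \<le> b" using slope by (simp add: mult_le_0_iff)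
  ultimately have x0_prop: "between x0 a b \<and> \<phi> a + da * (x0 - a) = \<phi> b + db * (x0 - b)"
    using x0 ab unfolding between_def by (simp add: algebra_simps)
  have "(THE y. between y a b \<and> \<phi> a + deriv \<phi> a * (y - a) = \<phi> b + deriv \<phi> b * (y - b)) = x0"
  proof (rule the_equality)
    show "between x0 a b \<and> \<phi> a + deriv \<phi> a * (x0 - a) = \<phi> b + deriv \<phi> b * (x0 - b)"
      using x0_prop unfolding da_def db_def .
    fix y assume "between y a b \<and> \<phi> a + deriv \<phi> a * (y - a) = \<phi> b + deriv \<phi> b * (y - b)"
    then have "(da - db) * y = (da - db) * x0" using x0 unfolding da_def db_def by (simp add: algebra_simps)
    then show "y = x0" using slope by simp
  qed
  then have "xKL \<phi> a b = x0" unfolding xKL_def using ab by simp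
  then show "between (xKL \<phi> a b) a b"
    "\<phi> a + deriv \<phi> a * (xKL \<phi> a b - a) = \<phi> b + deriv \<phi> b * (xKL \<phi> a b - b)"
    using x0_prop unfolding da_def db_def by auto
qed

lemma xKL_tangents:
  assumes tc: "tangent_convex \<phi>" and a: "0 < a" and b: "0 < b"
  shows "between (xKL \<phi> a b) a b"
    "\<phi> a + deriv \<phi> a * (xKL \<phi> a b - a) = \<phi> b + deriv \<phi> b * (xKL \<phi> a b - b)"
proof -
  consider "a < b" | "a = b" | "b < a" by linarith
  then have "between (xKL \<phi> a b) a b
      \<and> \<phi> a + deriv \<phi> a * (xKL \<phi> a b - a) = \<phi> b + deriv \<phi> b * (xKL \<phi> a b - b)"
  proof cases
    case 3
    then show ?thesis using xKL_less[OF tc b 3] by (simp add: xKL_commute between_commute)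
  qed (use xKL_less[OF tc a] in \<open>auto simp: xKL_def between_def\<close>)
  then show "between (xKL \<phi> a b) a b"
    "\<phi> a + deriv \<phi> a * (xKL \<phi> a b - a) = \<phi> b + deriv \<phi> b * (xKL \<phi> a b - b)"
    by auto
qed

lemma dphi_commute:
  assumes "tangent_convex \<phi>" "0 < a" "0 < b"
  shows "dphi \<phi> b a s = dphi \<phi> a b s"
  using xKL_tangents(2)[OF assms] unfolding dphi_def xKL_commute[of \<phi> b a]
  by (simp add: algebra_simps)

text \<open>
  With D = phi'(b) - phi'(a) and the gaps Bs, Bx of phi above its tangent at a, taken at s and at
  x = x_KL, the remainder equals D (s - x) / 2 - Bs; the hypotheses are what the tangent
  inequalities give on a \<le> x, s \<le> b.\<close>

lemma tangent_gap_abs_le: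
  fixes a b s x D Bs Bx :: real
  assumes x: "a \<le> x" "x \<le> b" and s: "a \<le> s" "s \<le> b" and D: "0 \<le> D" and Bs: "0 \<le> Bs"
    and Bx: "Bx \<le> D * (b - x)" "Bx \<le> D * (x - a)"
    and left: "s \<le> x \<Longrightarrow> Bs \<le> D * (s - a)" "s \<le> x \<Longrightarrow> Bs \<le> Bx"
    and right: "x \<le> s \<Longrightarrow> Bs \<le> Bx + D * (s - x)"
  shows "\<bar>D * (s - x) / 2 - Bs\<bar> \<le> 3/4 * (D * (b - a))"
proof -
  define p q r v where "p = D * (s - a)" and "q = D * (x - s)" and "r = D * (b - x)" and "v = D * (x - a)"
  have split: "D * (b - a) = p + q + r" "D * (s - x) = - q" "D * (b - s) = q + r" "v = p + q"
    unfolding p_def q_def r_def v_def by (simp_all add: algebra_simps)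
  have nonneg: "0 \<le> p" "0 \<le> r" "0 \<le> v" "0 \<le> D * (b - s)"
    unfolding p_def r_def v_def using D x s by simp_all
  consider "s \<le> x" | "x \<le> s" by linarith
  then show ?thesis
  proof cases
    case 1
    have "0 \<le> q" using D 1 unfolding q_def by simp
    then show ?thesis using split nonneg Bs Bx left[OF 1]
      unfolding p_def[symmetric] q_def[symmetric] r_def[symmetric] v_def[symmetric] abs_le_iff by linarith
  next
    case 2
    have "q \<le> 0" using D 2 unfolding q_def by (simp add: mult_nonneg_nonpos)
    then show ?thesis using split nonneg Bs Bx right[OF 2]
      unfolding p_def[symmetric] q_def[symmetric] r_def[symmetric] v_def[symmetric] abs_le_iff by linarith
  qed
qed

lemma dphi_abs_le_ordered:
  assumes tc: "tangent_convex \<phi>" and a: "0 < a" and ab: "a < b"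
    and s: "between s a (xKL \<phi> a b) \<or> between s b (xKL \<phi> a b)"
  shows "\<bar>dphi \<phi> a b s\<bar> \<le> 3/4 * (\<bar>deriv \<phi> b - deriv \<phi> a\<bar> * \<bar>b - a\<bar>)"
proof -
  define x where "x = xKL \<phi> a b"
  define d where "d = deriv \<phi>"
  define gap where "gap y = \<phi> y - \<phi> a - d a * (y - a)" for y
  have xab: "a \<le> x" "x \<le> b" and tangents: "\<phi> a + d a * (x - a) = \<phi> b + d b * (x - b)"
    using xKL_less[OF tc a ab] ab unfolding x_def d_def between_def by auto
  have sab: "a \<le> s" "s \<le> b" using s xab unfolding x_def between_def by auto
  have pos: "0 < b" "0 < x" "0 < s" using xab sab a by auto
  have T: "\<phi> y + d y * (z - y) \<le> \<phi> z" if "0 < y" "0 < z" for y z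
    unfolding d_def using tangent_convex_tangent_le[OF tc that] .
  have mono: "d y \<le> d z" if "0 < y" "y \<le> z" for y z
    unfolding d_def using tangent_convex_deriv_mono[OF tc that] .
  have slope_le: "(d z - d y) * w \<le> (d b - d a) * w" if "a \<le> y" "z \<le> b" "0 \<le> w" "0 < y" "0 < z" for y z w
    using mono[OF a \<open>a \<le> y\<close>] mono[OF \<open>0 < z\<close> \<open>z \<le> b\<close>] that by (intro mult_right_mono) auto
  have "\<bar>(d b - d a) * (s - x) / 2 - gap s\<bar> \<le> 3/4 * ((d b - d a) * (b - a))"
  proof (rule tangent_gap_abs_le[OF xab sab])
    show "0 \<le> d b - d a" "0 \<le> gap s" using mono[OF a] ab T[OF a pos(3)] by (auto simp: gap_def)
    have "gap x \<le> (d b - d x) * (b - x)" using T[OF pos(2,1)] tangents by (simp add: gap_def algebra_simps)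
    also have "\<dots> \<le> (d b - d a) * (b - x)" using slope_le[of x b "b - x"] xab pos by auto
    finally show "gap x \<le> (d b - d a) * (b - x)" .
    have "gap x \<le> (d x - d a) * (x - a)" using T[OF pos(2) a] by (simp add: gap_def algebra_simps)
    also have "\<dots> \<le> (d b - d a) * (x - a)" using slope_le[of a x "x - a"] xab pos a by auto
    finally show "gap x \<le> (d b - d a) * (x - a)" .
    assume "s \<le> x"
    have "gap s \<le> (d s - d a) * (s - a)" using T[OF pos(3) a] by (simp add: gap_def algebra_simps)
    also have "\<dots> \<le> (d b - d a) * (s - a)" using slope_le[of a s "s - a"] sab pos a by auto
    finally show "gap s \<le> (d b - d a) * (s - a)" .
    show "gap s \<le> gap x"
      using T[OF pos(3,2)] mono[OF a sab(1)] \<open>s \<le> x\<close> mult_right_mono[of "d a" "d s" "x - s"]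
      by (simp add: gap_def algebra_simps)
  next
    assume "x \<le> s"
    have "gap s - gap x \<le> (d s - d a) * (s - x)" using T[OF pos(3,2)] by (simp add: gap_def algebra_simps)
    also have "\<dots> \<le> (d b - d a) * (s - x)" using slope_le[of a s "s - x"] \<open>x \<le> s\<close> sab pos a by auto
    finally show "gap s \<le> gap x + (d b - d a) * (s - x)" by simp
  qed
  moreover have "dphi \<phi> a b s = (d b - d a) * (s - x) / 2 - gap s"
    unfolding dphi_def x_def[symmetric] d_def[symmetric] gap_def by (simp add: field_simps)
  moreover have "d a \<le> d b" using mono[OF a] ab by simp
  ultimately show ?thesis using ab unfolding d_def by simp
qed

lemma dphi_abs_le:
  assumes tc: "tangent_convex \<phi>" and a: "0 < a" and b: "0 < b"
    and s: "between s a (xKL \<phi> a b) \<or> between s b (xKL \<phi> a b)"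
  shows "\<bar>dphi \<phi> a b s\<bar> \<le> 3/4 * (\<bar>deriv \<phi> b - deriv \<phi> a\<bar> * \<bar>b - a\<bar>)"
proof -
  consider "a < b" | "a = b" | "b < a" by linarith
  then show ?thesis
  proof cases
    case 2
    then have "s = a" using s by (auto simp: xKL_def between_def)
    then show ?thesis using 2 by (simp add: dphi_def xKL_def)
  next
    case 3
    have "\<bar>dphi \<phi> b a s\<bar> \<le> 3/4 * (\<bar>deriv \<phi> a - deriv \<phi> b\<bar> * \<bar>a - b\<bar>)"
      using dphi_abs_le_ordered[OF tc b 3] s by (auto simp: xKL_commute)
    then show ?thesis using dphi_commute[OF tc a b] by (simp add: abs_minus_commute)
  qed (use dphi_abs_le_ordered[OF tc a] s in auto)
qed

lemma between_xKL_le_max: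
  assumes "tangent_convex \<phi>" "0 < a" "0 < b"
    and "between s a (xKL \<phi> a b) \<or> between s b (xKL \<phi> a b)"
  shows "s \<le> max a b"
  using assms(4) xKL_tangents(1)[OF assms(1-3)] unfolding between_def by auto

lemma tangent_convex_upwind_sign:
  assumes tc: "tangent_convex \<phi>" and a: "0 < a" and b: "0 < b" and s: "between s a (xKL \<phi> a b)"
  shows "(deriv \<phi> b - deriv \<phi> a) * (s - xKL \<phi> a b) \<le> 0"
proof (cases "a \<le> b")
  case True
  then have "s \<le> xKL \<phi> a b" using s xKL_tangents(1)[OF tc a b] unfolding between_def by auto
  moreover have "deriv \<phi> a \<le> deriv \<phi> b" using tangent_convex_deriv_mono[OF tc a True] .
  ultimately show ?thesis by (simp add: mult_nonneg_nonpos)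
next
  case False
  then have "xKL \<phi> a b \<le> s" using s xKL_tangents(1)[OF tc a b] unfolding between_def by auto
  moreover have "deriv \<phi> b \<le> deriv \<phi> a" using tangent_convex_deriv_mono[OF tc b] False by simp
  ultimately show ?thesis by (simp add: mult_nonpos_nonneg)
qed

lemma dphi_upwind_sign:
  assumes tc: "tangent_convex \<phi>" and a: "0 < a" and b: "0 < b"
    and s: "if u \<ge> 0 then between s a (xKL \<phi> a b) else between s b (xKL \<phi> a b)"
  shows "u * (deriv \<phi> b - deriv \<phi> a) * (s - xKL \<phi> a b) \<le> 0"
proof (cases "u \<ge> 0")
  case True
  then show ?thesis
    using tangent_convex_upwind_sign[OF tc a b] s by (simp add: mult.assoc mult_nonneg_nonpos)
next
  case False
  then have "(deriv \<phi> a - deriv \<phi> b) * (s - xKL \<phi> a b) \<le> 0"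
    using tangent_convex_upwind_sign[OF tc b a] s by (simp add: xKL_commute)
  then have "0 \<le> (deriv \<phi> b - deriv \<phi> a) * (s - xKL \<phi> a b)" by (simp add: algebra_simps)
  then show ?thesis using False by (simp add: mult.assoc mult_nonpos_nonneg)
qed

lemma deriv_phi_rho: "0 < x \<Longrightarrow> deriv phi_rho x = ln x + 1"
proof -
  assume x: "0 < x"
  have "((\<lambda>z. z * ln z) has_real_derivative (1 * ln x + x * (1 / x))) (at x)"
    using x by (auto intro!: derivative_eq_intros)
  then have "(phi_rho has_real_derivative (ln x + 1)) (at x)"
    using x unfolding phi_rho_def[abs_def] by simp
  then show ?thesis by (rule DERIV_imp_deriv)
qed

lemma deriv_phi_e: "0 < x \<Longrightarrow> deriv (phi_e \<gamma>) x = - (1 / (\<gamma> - 1)) * (1 / x)"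
proof -
  assume x: "0 < x"
  have "((\<lambda>z. - (1 / (\<gamma> - 1)) * ln z) has_real_derivative (- (1 / (\<gamma> - 1)) * inverse x)) (at x)"
    by (rule DERIV_cmult[OF DERIV_ln[OF x]])
  then have "((\<lambda>z. - (1 / (\<gamma> - 1)) * ln z) has_real_derivative (- (1 / (\<gamma> - 1)) * (1 / x))) (at x)"
    by (simp only: inverse_eq_divide)
  moreover have "phi_e \<gamma> = (\<lambda>z. - (1 / (\<gamma> - 1)) * ln z)" by (intro ext) (simp only: phi_e_def)
  ultimately have "(phi_e \<gamma> has_real_derivative (- (1 / (\<gamma> - 1)) * (1 / x))) (at x)"
    by simp
  then show ?thesis by (rule DERIV_imp_deriv)
qed

lemma tangent_convex_phi_rho: "tangent_convex phi_rho"
  unfolding tangent_convex_def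
proof (intro conjI allI impI)
  fix x y :: real assume x: "0 < x" and y: "0 < y"
  have l: "ln (x / y) \<le> x / y - 1" using ln_le_minus_one x y by simp
  have "ln (x/y) = ln x - ln y" using x y by (simp add: ln_div)
  then have "y * (ln x - ln y) \<le> y * (x / y - 1)" using l y by (intro mult_left_mono) auto
  then have "y * ln x - y * ln y \<le> x - y" using y by (simp add: algebra_simps)
  then show "phi_rho x + deriv phi_rho x * (y - x) \<le> phi_rho y"
    unfolding deriv_phi_rho[OF x] phi_rho_def by (simp add: algebra_simps)
next
  fix x y :: real assume x: "0 < x" and xy: "x < y"
  then show "deriv phi_rho x < deriv phi_rho y" using deriv_phi_rho[OF x] deriv_phi_rho[of y] by simp
qed

lemma tangent_convex_phi_e:
  assumes "\<gamma> > 1"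
  shows "tangent_convex (phi_e \<gamma>)"
proof -
  define c where "c = 1 / (\<gamma> - 1)"
  have c: "c > 0" unfolding c_def using assms by simp
  have deriv_c: "deriv (phi_e \<gamma>) x = - c / x" if "0 < x" for x
    using deriv_phi_e[OF that] unfolding c_def by simp
  show ?thesis unfolding tangent_convex_def
  proof (intro conjI allI impI)
    fix x y :: real assume x: "0 < x" and y: "0 < y"
    have "ln (y / x) \<le> y / x - 1" using ln_le_minus_one x y by simp
    then have "c * (ln y - ln x) \<le> c * ((y - x) / x)"
      using c x y by (intro mult_left_mono) (auto simp: ln_div diff_divide_distrib)
    then show "phi_e \<gamma> x + deriv (phi_e \<gamma>) x * (y - x) \<le> phi_e \<gamma> y"
      unfolding deriv_c[OF x] phi_e_def c_def[symmetric] by (simp add: algebra_simps)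
  next
    fix x y :: real assume x: "0 < x" and "x < y"
    then have "0 < y" by simp
    show "deriv (phi_e \<gamma>) x < deriv (phi_e \<gamma>) y"
      unfolding deriv_c[OF x] deriv_c[OF \<open>0 < y\<close>] using c x \<open>x < y\<close> by (simp add: divide_strict_left_mono)
  qed
qed

abbreviation deriv_sup :: "(real \<Rightarrow> real) \<Rightarrow> real \<Rightarrow> real" where
  "deriv_sup \<phi> M \<equiv> max \<bar>deriv \<phi> (1 / M)\<bar> \<bar>deriv \<phi> M\<bar>"

lemma abs_deriv_le_deriv_sup:
  assumes tc: "tangent_convex \<phi>" and M: "M > 1" and z: "1 / M \<le> z" "z \<le> M"
  shows "\<bar>deriv \<phi> z\<bar> \<le> deriv_sup \<phi> M"
proof -
  have "0 < 1 / M" using M by simp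
  then have "deriv \<phi> (1 / M) \<le> deriv \<phi> z" "deriv \<phi> z \<le> deriv \<phi> M"
    using tangent_convex_deriv_mono[OF tc] z less_le_trans[OF \<open>0 < 1 / M\<close> z(1)] by auto
  then show ?thesis by (auto simp: abs_if max_def)
qed

lemma dphi_abs_le_deriv_sup:
  assumes tc: "tangent_convex \<phi>" and M: "M > 1" and a: "1 / M \<le> a" "a \<le> M" and b: "1 / M \<le> b" "b \<le> M"
    and s: "between s a (xKL \<phi> a b) \<or> between s b (xKL \<phi> a b)"
  shows "\<bar>dphi \<phi> a b s\<bar> \<le> 3/2 * deriv_sup \<phi> M * \<bar>b - a\<bar>"
proof -
  have pos: "0 < a" "0 < b" using a b M by (auto intro: less_le_trans[of 0 "1 / M"])
  have "\<bar>deriv \<phi> b - deriv \<phi> a\<bar> \<le> 2 * deriv_sup \<phi> M"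
    using abs_triangle_ineq4[of "deriv \<phi> b" "deriv \<phi> a"]
      abs_deriv_le_deriv_sup[OF tc M a] abs_deriv_le_deriv_sup[OF tc M b] by linarith
  then have "\<bar>deriv \<phi> b - deriv \<phi> a\<bar> * \<bar>b - a\<bar> \<le> 2 * deriv_sup \<phi> M * \<bar>b - a\<bar>"
    by (rule mult_right_mono) simp
  then show ?thesis using dphi_abs_le[OF tc pos s] by linarith
qed

section \<open>The discrete entropy balance\<close>

text \<open>
  fr and fe stand for phi_rho(rho) and phi_e(e), dr1 and de1 for their derivatives at the new time
  level. The energy balance is weighted by de1 \<le> 0, and de1 p1 = -r1 is the equation of state.\<close>

lemma entropy_time_step_le:
  fixes m r0 r1 e0 e1 p1 SF SFe SU fr0 fr1 dr1 fe0 fe1 de1 :: real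
  assumes m: "0 \<le> m" and r0: "0 \<le> r0" and mass: "m * (r1 - r0) + SF = 0"
    and energy: "m * (r1 * e1 - r0 * e0) + SFe + p1 * SU \<ge> 0"
    and de1: "de1 \<le> 0" and eos: "de1 * p1 = - r1"
    and tangent_rho: "fr1 + dr1 * (r0 - r1) \<le> fr0" and tangent_e: "fe1 + de1 * (e0 - e1) \<le> fe0"
  shows "m * ((fr1 + r1 * fe1) - (fr0 + r0 * fe0)) \<le> r1 * SU - (dr1 + fe1 - de1 * e1) * SF - de1 * SFe"
proof -
  have 1: "m * (fr1 - fr0) \<le> m * (dr1 * (r1 - r0))"
    using tangent_rho m by (intro mult_left_mono) (auto simp: algebra_simps)
  have 2: "(m * r0) * (fe1 - fe0) \<le> (m * r0) * (de1 * (e1 - e0))"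
    using tangent_e m r0 by (intro mult_left_mono) (auto simp: algebra_simps)
  have 3: "de1 * (m * (r1 * e1 - r0 * e0)) \<le> de1 * (- SFe - p1 * SU)"
    using energy de1 by (intro mult_left_mono_neg) auto
  have SF: "SF = - (m * (r1 - r0))" using mass by simp
  have "m * ((fr1 + r1 * fe1) - (fr0 + r0 * fe0))
      = m * (fr1 - fr0) + fe1 * (m * (r1 - r0)) + (m * r0) * (fe1 - fe0)"
    by (simp add: algebra_simps)
  moreover have "(m * r0) * (de1 * (e1 - e0)) = de1 * (m * (r1 * e1 - r0 * e0)) - de1 * e1 * (m * (r1 - r0))"
    by (simp add: algebra_simps)
  moreover have "de1 * (- SFe - p1 * SU) = - de1 * SFe + r1 * SU"
    using eos by (simp add: algebra_simps)
  moreover have "r1 * SU - (dr1 + fe1 - de1 * e1) * SF - de1 * SFe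
      = m * (dr1 * (r1 - r0)) + fe1 * (m * (r1 - r0)) + (- de1 * SFe + r1 * SU) - de1 * e1 * (m * (r1 - r0))"
    unfolding SF by (simp add: algebra_simps)
  ultimately show ?thesis using 1 2 3 by linarith
qed

text \<open>
  The weight of the face term area * u_{K,sigma} in the entropy balance of K obtained from the mass
  and energy balances; r, e are the cell values and rs, es the face values.\<close>

definition entropy_face_weight :: "real \<Rightarrow> real \<Rightarrow> real \<Rightarrow> real \<Rightarrow> real \<Rightarrow> real" where
  "entropy_face_weight \<gamma> r e rs es =
     r - rs * (deriv phi_rho r + phi_e \<gamma> e + deriv (phi_e \<gamma>) e * (es - e))"

lemma face_entropy_dissipation:
  fixes \<gamma> ar u rs es r rL e eL :: real
  assumes \<gamma>: "\<gamma> > 1" and ar: "ar > 0" and rs: "rs > 0"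
    and r: "r > 0" and rL: "rL > 0" and e: "e > 0" and eL: "eL > 0"
    and upwind: "if u \<ge> 0 then between rs r (xKL phi_rho r rL) \<and> between es e (xKL (phi_e \<gamma>) e eL)
             else between rs rL (xKL phi_rho r rL) \<and> between es eL (xKL (phi_e \<gamma>) e eL)"
  shows "ar * eta \<gamma> rs es * u + ar * u * entropy_face_weight \<gamma> r e rs es
      + (ar * dphi phi_rho r rL rs * u + dphi (phi_e \<gamma>) e eL es * (ar * rs * u)) \<le> 0"
proof -
  have phi_rho_r: "phi_rho r = r * deriv phi_rho r - r"
    using r unfolding deriv_phi_rho[OF r] phi_rho_def by (simp add: algebra_simps)
  have "ar * eta \<gamma> rs es * u + ar * u * entropy_face_weight \<gamma> r e rs es
      + (ar * dphi phi_rho r rL rs * u + dphi (phi_e \<gamma>) e eL es * (ar * rs * u))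
      = 1/2 * ar * (u * (deriv phi_rho rL - deriv phi_rho r) * (rs - xKL phi_rho r rL))
        + 1/2 * (ar * rs) * (u * (deriv (phi_e \<gamma>) eL - deriv (phi_e \<gamma>) e) * (es - xKL (phi_e \<gamma>) e eL))"
    unfolding dphi_def eta_def entropy_face_weight_def phi_rho_r by (simp add: field_simps)
  moreover have "u * (deriv phi_rho rL - deriv phi_rho r) * (rs - xKL phi_rho r rL) \<le> 0"
    by (rule dphi_upwind_sign[OF tangent_convex_phi_rho r rL]) (use upwind in auto)
  then have "1/2 * ar * (u * (deriv phi_rho rL - deriv phi_rho r) * (rs - xKL phi_rho r rL)) \<le> 0"
    using ar by (simp add: mult_nonneg_nonpos)
  moreover have "u * (deriv (phi_e \<gamma>) eL - deriv (phi_e \<gamma>) e) * (es - xKL (phi_e \<gamma>) e eL) \<le> 0"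
    by (rule dphi_upwind_sign[OF tangent_convex_phi_e[OF \<gamma>] e eL]) (use upwind in auto)
  then have "1/2 * (ar * rs) * (u * (deriv (phi_e \<gamma>) eL - deriv (phi_e \<gamma>) e) * (es - xKL (phi_e \<gamma>) e eL)) \<le> 0"
    using ar rs by (simp add: mult_nonneg_nonpos)
  ultimately show ?thesis by linarith
qed

locale entropy_scheme =
  fixes \<Omega> :: "'a::euclidean_space set" and Msh :: "'a set set" and E :: "'a set set"
    and EK :: "'a set \<Rightarrow> 'a set set" and area :: "'a set \<Rightarrow> real"
    and T \<gamma> :: real and N :: nat
    and rho e p rhof ef :: "nat \<Rightarrow> 'a set \<Rightarrow> real"
    and u :: "nat \<Rightarrow> 'a set \<Rightarrow> 'a set \<Rightarrow> real"
    and dt :: real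
  assumes dt_def: "dt = T / real N"
    and mesh: "polytopal_mesh \<Omega> Msh E EK"
    and area_pos: "\<forall>\<sigma>\<in>E. area \<sigma> > 0"
    and T_pos: "T > 0" and N_pos: "N \<ge> 1"
    and gamma: "\<gamma> > 1"
    and u_int: "\<forall>n\<le>N. \<forall>K\<in>Msh. \<forall>L\<in>Msh. \<forall>\<sigma>. K \<noteq> L \<and> \<sigma> \<in> EK K \<and> \<sigma> \<in> EK L
                  \<longrightarrow> u n L \<sigma> = - u n K \<sigma>"
    and u_ext: "\<forall>n\<le>N. \<forall>K\<in>Msh. \<forall>\<sigma>\<in>EK K \<inter> ext_faces Msh EK E. u n K \<sigma> = 0"
    and pos: "\<forall>n\<le>N. \<forall>K\<in>Msh. rho n K > 0 \<and> e n K > 0 \<and> p n K > 0"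
    and face_pos: "\<forall>n<N. \<forall>\<sigma>\<in>E. rhof (Suc n) \<sigma> > 0 \<and> ef (Suc n) \<sigma> > 0"
    and mass: "\<forall>n<N. \<forall>K\<in>Msh.
       measure lebesgue K / dt * (rho (Suc n) K - rho n K)
       + (\<Sum>\<sigma>\<in>EK K. area \<sigma> * rhof (Suc n) \<sigma> * u (Suc n) K \<sigma>) = 0"
    and energy: "\<forall>n<N. \<forall>K\<in>Msh.
       measure lebesgue K / dt * (rho (Suc n) K * e (Suc n) K - rho n K * e n K)
       + (\<Sum>\<sigma>\<in>EK K. area \<sigma> * rhof (Suc n) \<sigma> * u (Suc n) K \<sigma> * ef (Suc n) \<sigma>)
       + p (Suc n) K * (\<Sum>\<sigma>\<in>EK K. area \<sigma> * u (Suc n) K \<sigma>) \<ge> 0"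
    and eos: "\<forall>n<N. \<forall>K\<in>Msh. p (Suc n) K = (\<gamma> - 1) * rho (Suc n) K * e (Suc n) K"
    and upwind: "\<forall>n<N. \<forall>K\<in>Msh. \<forall>L\<in>Msh. \<forall>\<sigma>. K \<noteq> L \<and> \<sigma> \<in> EK K \<and> \<sigma> \<in> EK L \<longrightarrow>
       (if u (Suc n) K \<sigma> \<ge> 0 then
          between (rhof (Suc n) \<sigma>) (rho (Suc n) K) (xKL phi_rho (rho (Suc n) K) (rho (Suc n) L))
          \<and> between (ef (Suc n) \<sigma>) (e (Suc n) K) (xKL (phi_e \<gamma>) (e (Suc n) K) (e (Suc n) L))
        else
          between (rhof (Suc n) \<sigma>) (rho (Suc n) L) (xKL phi_rho (rho (Suc n) K) (rho (Suc n) L))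
          \<and> between (ef (Suc n) \<sigma>) (e (Suc n) L) (xKL (phi_e \<gamma>) (e (Suc n) K) (e (Suc n) L)))"
begin

abbreviation "flux n K \<sigma> \<equiv> dR_flux \<gamma> Msh EK area rho rhof e ef u n K \<sigma>"

abbreviation "remainder \<equiv> dR \<gamma> Msh E EK area rho rhof e ef u"

lemma dt_pos: "dt > 0"
  using T_pos N_pos unfolding dt_def by simp

lemma cell_measure_remainder:
  assumes "K \<in> Msh"
  shows "measure lebesgue K * remainder n K = (\<Sum>\<sigma>\<in>EK K \<inter> int_faces Msh EK E. flux n K \<sigma>)"
  using mesh_cell(7)[OF mesh assms] unfolding dR_def by simp

lemma flux_antisym:
  assumes n: "n \<le> N" and K: "K \<in> Msh" and L: "L \<in> Msh" and KL: "K \<noteq> L"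
    and \<sigma>K: "\<sigma> \<in> EK K" and \<sigma>L: "\<sigma> \<in> EK L"
  shows "flux n L \<sigma> = - flux n K \<sigma>"
proof -
  have pK: "rho n K > 0" "e n K > 0" and pL: "rho n L > 0" "e n L > 0" using pos n K L by auto
  have "u n L \<sigma> = - u n K \<sigma>" using u_int n K L KL \<sigma>K \<sigma>L by blast
  then show ?thesis
    unfolding dR_flux_def Let_def shared_face(2)[OF mesh K L KL \<sigma>K \<sigma>L]
      shared_face(2)[OF mesh L K KL[symmetric] \<sigma>L \<sigma>K]
      dphi_commute[OF tangent_convex_phi_rho pK(1) pL(1)] dphi_commute[OF tangent_convex_phi_e[OF gamma] pK(2) pL(2)]
    by (simp add: algebra_simps)
qed

lemma cell_entropy_change_le:
  assumes n: "n < N" and K: "K \<in> Msh"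
  shows "measure lebesgue K / dt * (eta \<gamma> (rho (Suc n) K) (e (Suc n) K) - eta \<gamma> (rho n K) (e n K))
    \<le> (\<Sum>\<sigma>\<in>EK K. area \<sigma> * u (Suc n) K \<sigma>
          * entropy_face_weight \<gamma> (rho (Suc n) K) (e (Suc n) K) (rhof (Suc n) \<sigma>) (ef (Suc n) \<sigma>))"
proof -
  define m r1 r0 e1 e0 where "m = measure lebesgue K / dt" and "r1 = rho (Suc n) K" and "r0 = rho n K"
    and "e1 = e (Suc n) K" and "e0 = e n K"
  define dr1 fe1 de1 where "dr1 = deriv phi_rho r1" and "fe1 = phi_e \<gamma> e1" and "de1 = deriv (phi_e \<gamma>) e1"
  define F A where "F \<sigma> = area \<sigma> * rhof (Suc n) \<sigma> * u (Suc n) K \<sigma>"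
    and "A \<sigma> = area \<sigma> * u (Suc n) K \<sigma>" for \<sigma>
  have r: "r1 > 0" "r0 > 0" and e: "e1 > 0" "e0 > 0"
    using pos n K unfolding r1_def r0_def e1_def e0_def by auto
  have de1: "de1 = - (1 / (\<gamma> - 1)) * (1 / e1)" unfolding de1_def using deriv_phi_e[OF e(1)] .
  have "p (Suc n) K = (\<gamma> - 1) * r1 * e1" unfolding r1_def e1_def using eos n K by auto
  then have eos_K: "de1 * p (Suc n) K = - r1" unfolding de1 using gamma e by (simp add: field_simps)
  have "m * (eta \<gamma> r1 e1 - eta \<gamma> r0 e0)
      \<le> r1 * (\<Sum>\<sigma>\<in>EK K. A \<sigma>) - (dr1 + fe1 - de1 * e1) * (\<Sum>\<sigma>\<in>EK K. F \<sigma>) - de1 * (\<Sum>\<sigma>\<in>EK K. F \<sigma> * ef (Suc n) \<sigma>)"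
    unfolding eta_def fe1_def[symmetric]
  proof (rule entropy_time_step_le[OF _ _ _ _ _ eos_K])
    show "0 \<le> m" unfolding m_def using mesh_cell(7)[OF mesh K] dt_pos by simp
    show "m * (r1 - r0) + (\<Sum>\<sigma>\<in>EK K. F \<sigma>) = 0"
      using mass n K unfolding m_def r1_def r0_def F_def by auto
    show "m * (r1 * e1 - r0 * e0) + (\<Sum>\<sigma>\<in>EK K. F \<sigma> * ef (Suc n) \<sigma>) + p (Suc n) K * (\<Sum>\<sigma>\<in>EK K. A \<sigma>) \<ge> 0"
      using energy n K unfolding m_def r1_def r0_def e1_def e0_def F_def A_def by auto
    show "de1 \<le> 0" unfolding de1 using gamma e by simp
    show "phi_rho r1 + dr1 * (r0 - r1) \<le> phi_rho r0"
      unfolding dr1_def using tangent_convex_tangent_le[OF tangent_convex_phi_rho r] .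
    show "fe1 + de1 * (e0 - e1) \<le> phi_e \<gamma> e0"
      unfolding fe1_def de1_def using tangent_convex_tangent_le[OF tangent_convex_phi_e[OF gamma] e] .
  qed (use r in simp)
  also have "\<dots> = (\<Sum>\<sigma>\<in>EK K. A \<sigma> * entropy_face_weight \<gamma> r1 e1 (rhof (Suc n) \<sigma>) (ef (Suc n) \<sigma>))"
    unfolding entropy_face_weight_def dr1_def[symmetric] fe1_def[symmetric] de1_def[symmetric] F_def A_def
    by (simp add: sum_distrib_left sum_subtractf sum.distrib algebra_simps)
  finally show ?thesis unfolding m_def r1_def r0_def e1_def e0_def A_def .
qed

lemma local_entropy:
  assumes n: "n < N" and K: "K \<in> Msh"
  shows "measure lebesgue K / dt * (eta \<gamma> (rho (Suc n) K) (e (Suc n) K) - eta \<gamma> (rho n K) (e n K))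
        + (\<Sum>\<sigma>\<in>EK K. area \<sigma> * eta \<gamma> (rhof (Suc n) \<sigma>) (ef (Suc n) \<sigma>) * u (Suc n) K \<sigma>)
        + measure lebesgue K * remainder (Suc n) K \<le> 0"
proof -
  define I where "I = int_faces Msh EK E"
  define H where "H \<sigma> = area \<sigma> * eta \<gamma> (rhof (Suc n) \<sigma>) (ef (Suc n) \<sigma>) * u (Suc n) K \<sigma>
    + area \<sigma> * u (Suc n) K \<sigma>
      * entropy_face_weight \<gamma> (rho (Suc n) K) (e (Suc n) K) (rhof (Suc n) \<sigma>) (ef (Suc n) \<sigma>)" for \<sigma>
  have interior: "H \<sigma> + flux (Suc n) K \<sigma> \<le> 0" if \<sigma>: "\<sigma> \<in> EK K \<inter> I" for \<sigma>
  proof -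
    define L where "L = nb Msh EK K \<sigma>"
    have L: "L \<in> Msh" "L \<noteq> K" "\<sigma> \<in> EK L" using int_face_nb[OF mesh K] \<sigma> unfolding L_def I_def by auto
    have "\<sigma> \<in> E" using mesh_face(3)[OF mesh K] \<sigma> by auto
    then have "area \<sigma> > 0" "rhof (Suc n) \<sigma> > 0" using area_pos face_pos n by auto
    moreover have "rho (Suc n) K > 0" "rho (Suc n) L > 0" "e (Suc n) K > 0" "e (Suc n) L > 0"
      using pos n K L(1) by auto
    ultimately show ?thesis
      using face_entropy_dissipation[OF gamma] upwind n K L \<sigma>
      unfolding H_def dR_flux_def Let_def L_def[symmetric] by (simp add: add.assoc)
  qed
  have boundary: "H \<sigma> = 0" if "\<sigma> \<in> EK K" "\<sigma> \<notin> I" for \<sigma>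
  proof -
    have "\<sigma> \<in> EK K \<inter> ext_faces Msh EK E"
      using that mesh_face(3)[OF mesh K] unfolding ext_faces_def I_def by auto
    then show ?thesis unfolding H_def using u_ext n K by auto
  qed
  have "finite (EK K)" using polytopal_meshD(6)[OF mesh] K by auto
  then have "(\<Sum>\<sigma>\<in>EK K. H \<sigma>) = (\<Sum>\<sigma>\<in>EK K \<inter> I. H \<sigma>)"
    by (rule sum.mono_neutral_right) (auto intro: boundary)
  then have "(\<Sum>\<sigma>\<in>EK K. H \<sigma>) + measure lebesgue K * remainder (Suc n) K
      = (\<Sum>\<sigma>\<in>EK K \<inter> I. H \<sigma> + flux (Suc n) K \<sigma>)"
    unfolding cell_measure_remainder[OF K] I_def[symmetric] sum.distrib by simp
  also have "\<dots> \<le> 0" using interior by (rule sum_nonpos)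
  finally show ?thesis
    using cell_entropy_change_le[OF n K] unfolding H_def sum.distrib by linarith
qed

lemma sum_entropy_flux_eq_0:
  assumes n: "n \<le> N"
  shows "(\<Sum>K\<in>Msh. \<Sum>\<sigma>\<in>EK K. g \<sigma> * u n K \<sigma>) = 0"
proof (rule sum_cells_faces_antisym[OF mesh])
  fix K L \<sigma> assume "K \<in> Msh" "L \<in> Msh" "K \<noteq> L" "\<sigma> \<in> EK K" "\<sigma> \<in> EK L"
  then have "u n L \<sigma> = - u n K \<sigma>" using u_int n by blast
  then show "g \<sigma> * u n L \<sigma> = - (g \<sigma> * u n K \<sigma>)" by simp
next
  fix K \<sigma> assume K: "K \<in> Msh" and "\<sigma> \<in> EK K" "\<sigma> \<notin> int_faces Msh EK E"
  then have "\<sigma> \<in> EK K \<inter> ext_faces Msh EK E" using mesh_face(3)[OF mesh K] unfolding ext_faces_def by auto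
  then show "g \<sigma> * u n K \<sigma> = 0" using u_ext n K by auto
qed

lemma sum_remainder_eq_0:
  assumes n: "n \<le> N"
  shows "(\<Sum>K\<in>Msh. measure lebesgue K * remainder n K) = 0"
proof -
  have "(\<Sum>K\<in>Msh. measure lebesgue K * remainder n K)
      = (\<Sum>K\<in>Msh. \<Sum>\<sigma>\<in>EK K \<inter> int_faces Msh EK E. flux n K \<sigma>)"
    by (rule sum.cong[OF refl]) (rule cell_measure_remainder)
  also have "\<dots> = 0" by (rule sum_cells_int_faces_antisym[OF mesh flux_antisym[OF n]])
  finally show ?thesis .
qed

lemma global_entropy:
  assumes n: "n < N"
  shows "(\<Sum>K\<in>Msh. measure lebesgue K * eta \<gamma> (rho (Suc n) K) (e (Suc n) K))
           \<le> (\<Sum>K\<in>Msh. measure lebesgue K * eta \<gamma> (rho n K) (e n K))"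
proof -
  define D where "D K = measure lebesgue K * eta \<gamma> (rho (Suc n) K) (e (Suc n) K)
    - measure lebesgue K * eta \<gamma> (rho n K) (e n K)" for K
  define H where "H K = (\<Sum>\<sigma>\<in>EK K. area \<sigma> * eta \<gamma> (rhof (Suc n) \<sigma>) (ef (Suc n) \<sigma>) * u (Suc n) K \<sigma>)" for K
  define R where "R K = measure lebesgue K * remainder (Suc n) K" for K
  have "(\<Sum>K\<in>Msh. D K / dt + H K + R K) \<le> 0"
    using local_entropy[OF n] unfolding D_def H_def R_def
    by (intro sum_nonpos) (simp add: right_diff_distrib diff_divide_distrib)
  moreover have "(\<Sum>K\<in>Msh. H K) = 0"
    unfolding H_def using sum_entropy_flux_eq_0[of "Suc n"] n by simp
  moreover have "(\<Sum>K\<in>Msh. R K) = 0" unfolding R_def using sum_remainder_eq_0[of "Suc n"] n by simp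
  ultimately have "(\<Sum>K\<in>Msh. D K) / dt \<le> 0" by (simp add: sum.distrib sum_divide_distrib)
  then have "(\<Sum>K\<in>Msh. D K) \<le> 0" using dt_pos by (simp add: divide_le_0_iff)
  then show ?thesis unfolding D_def sum_subtractf by simp
qed

lemma cell_values_bounds:
  assumes Mb: "Mb > 1"
    and bnds: "\<forall>n\<le>N. \<forall>K\<in>Msh. rho n K \<le> Mb \<and> 1 / rho n K \<le> Mb \<and> e n K \<le> Mb \<and> 1 / e n K \<le> Mb
             \<and> (\<forall>\<sigma>\<in>EK K. \<bar>u n K \<sigma>\<bar> \<le> Mb)"
    and n: "n \<le> N" and K: "K \<in> Msh"
  shows "1 / Mb \<le> rho n K" "rho n K \<le> Mb" "1 / Mb \<le> e n K" "e n K \<le> Mb"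
proof -
  have "rho n K \<le> Mb" "1 / rho n K \<le> Mb" "e n K \<le> Mb" "1 / e n K \<le> Mb"
    using bnds n K by blast+
  moreover have "0 < rho n K" "0 < e n K" using pos n K by auto
  ultimately show "1 / Mb \<le> rho n K" "rho n K \<le> Mb" "1 / Mb \<le> e n K" "e n K \<le> Mb"
    using Mb by (auto simp: field_simps)
qed

lemma upwind_between:
  assumes n: "n < N" and K: "K \<in> Msh" and L: "L \<in> Msh" and KL: "K \<noteq> L"
    and \<sigma>K: "\<sigma> \<in> EK K" and \<sigma>L: "\<sigma> \<in> EK L"
  shows "between (rhof (Suc n) \<sigma>) (rho (Suc n) K) (xKL phi_rho (rho (Suc n) K) (rho (Suc n) L))
      \<or> between (rhof (Suc n) \<sigma>) (rho (Suc n) L) (xKL phi_rho (rho (Suc n) K) (rho (Suc n) L))"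
    "between (ef (Suc n) \<sigma>) (e (Suc n) K) (xKL (phi_e \<gamma>) (e (Suc n) K) (e (Suc n) L))
      \<or> between (ef (Suc n) \<sigma>) (e (Suc n) L) (xKL (phi_e \<gamma>) (e (Suc n) K) (e (Suc n) L))"
  using upwind n K L KL \<sigma>K \<sigma>L by (auto split: if_splits)

lemma flux_abs_le:
  assumes n: "n < N" and Mb: "Mb > 1"
    and bnds: "\<forall>n\<le>N. \<forall>K\<in>Msh. rho n K \<le> Mb \<and> 1 / rho n K \<le> Mb \<and> e n K \<le> Mb \<and> 1 / e n K \<le> Mb
             \<and> (\<forall>\<sigma>\<in>EK K. \<bar>u n K \<sigma>\<bar> \<le> Mb)"
    and K: "K \<in> Msh" and L: "L \<in> Msh" and KL: "K \<noteq> L" and \<sigma>K: "\<sigma> \<in> EK K" and \<sigma>L: "\<sigma> \<in> EK L"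
  shows "\<bar>flux (Suc n) K \<sigma>\<bar> \<le> 3/2 * Mb * (area \<sigma> *
      (deriv_sup phi_rho Mb * \<bar>rho (Suc n) L - rho (Suc n) K\<bar>
       + Mb * deriv_sup (phi_e \<gamma>) Mb * \<bar>e (Suc n) L - e (Suc n) K\<bar>))"
proof -
  define X Y where "X = dphi phi_rho (rho (Suc n) K) (rho (Suc n) L) (rhof (Suc n) \<sigma>)"
    and "Y = dphi (phi_e \<gamma>) (e (Suc n) K) (e (Suc n) L) (ef (Suc n) \<sigma>)"
  have n1: "Suc n \<le> N" using n by simp
  note bK = cell_values_bounds[OF Mb bnds n1 K] and bL = cell_values_bounds[OF Mb bnds n1 L]
  note upw = upwind_between[OF n K L KL \<sigma>K \<sigma>L]
  have X: "\<bar>X\<bar> \<le> 3/2 * deriv_sup phi_rho Mb * \<bar>rho (Suc n) L - rho (Suc n) K\<bar>"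
    unfolding X_def using dphi_abs_le_deriv_sup[OF tangent_convex_phi_rho Mb bK(1,2) bL(1,2) upw(1)] .
  have Y: "\<bar>Y\<bar> \<le> 3/2 * deriv_sup (phi_e \<gamma>) Mb * \<bar>e (Suc n) L - e (Suc n) K\<bar>"
    unfolding Y_def using dphi_abs_le_deriv_sup[OF tangent_convex_phi_e[OF gamma] Mb bK(3,4) bL(3,4) upw(2)] .
  have "\<sigma> \<in> E" using mesh_face(3)[OF mesh K \<sigma>K] .
  then have ar: "area \<sigma> > 0" and rf: "rhof (Suc n) \<sigma> > 0" using area_pos face_pos n by auto
  have "rhof (Suc n) \<sigma> \<le> max (rho (Suc n) K) (rho (Suc n) L)"
    using between_xKL_le_max[OF tangent_convex_phi_rho _ _ upw(1)] pos n1 K L by auto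
  then have R: "\<bar>rhof (Suc n) \<sigma>\<bar> \<le> Mb" using rf bK(2) bL(2) by simp
  have "flux (Suc n) K \<sigma> = area \<sigma> * u (Suc n) K \<sigma> * (X + Y * rhof (Suc n) \<sigma>)"
    unfolding dR_flux_def Let_def shared_face(2)[OF mesh K L KL \<sigma>K \<sigma>L] X_def[symmetric] Y_def[symmetric]
    by (simp add: algebra_simps)
  then have "\<bar>flux (Suc n) K \<sigma>\<bar> = (area \<sigma> * \<bar>u (Suc n) K \<sigma>\<bar>) * \<bar>X + Y * rhof (Suc n) \<sigma>\<bar>"
    using ar by (simp add: abs_mult)
  also have "\<dots> \<le> (area \<sigma> * Mb) * (\<bar>X\<bar> + \<bar>Y\<bar> * Mb)"
  proof (rule mult_mono)
    show "area \<sigma> * \<bar>u (Suc n) K \<sigma>\<bar> \<le> area \<sigma> * Mb" using ar bnds n1 K \<sigma>K by simp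
    show "\<bar>X + Y * rhof (Suc n) \<sigma>\<bar> \<le> \<bar>X\<bar> + \<bar>Y\<bar> * Mb"
      using abs_triangle_ineq[of X "Y * rhof (Suc n) \<sigma>"] mult_left_mono[OF R, of "\<bar>Y\<bar>"] by (simp add: abs_mult)
  qed (use ar Mb in auto)
  also have "\<dots> \<le> area \<sigma> * Mb * (3/2 * deriv_sup phi_rho Mb * \<bar>rho (Suc n) L - rho (Suc n) K\<bar>
      + 3/2 * deriv_sup (phi_e \<gamma>) Mb * \<bar>e (Suc n) L - e (Suc n) K\<bar> * Mb)"
    using X Y ar Mb by (intro mult_left_mono add_mono mult_right_mono) auto
  finally show ?thesis by (simp add: algebra_simps)
qed

abbreviation "jump z n \<sigma> \<equiv> z n (nb Msh EK (some_cell Msh EK \<sigma>) \<sigma>) - z n (some_cell Msh EK \<sigma>)"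

text \<open>Conservativity pairs the two cells of each interior face.\<close>

lemma tested_remainder_le:
  assumes n: "1 \<le> n" "n \<le> N" and Mb: "Mb > 1"
    and bnds: "\<forall>n\<le>N. \<forall>K\<in>Msh. rho n K \<le> Mb \<and> 1 / rho n K \<le> Mb \<and> e n K \<le> Mb \<and> 1 / e n K \<le> Mb
             \<and> (\<forall>\<sigma>\<in>EK K. \<bar>u n K \<sigma>\<bar> \<le> Mb)"
    and tf: "test_fun \<Omega> T \<psi>" and t: "0 \<le> t"
  shows "(\<Sum>K\<in>Msh. measure lebesgue K * remainder n K * \<psi> (mass_center K, t))
    \<le> 3 * Mb * mesh_size Msh * grad_sup \<Omega> T \<psi> * (\<Sum>\<sigma>\<in>int_faces Msh EK E. area \<sigma> *
         (deriv_sup phi_rho Mb * \<bar>jump rho n \<sigma>\<bar> + Mb * deriv_sup (phi_e \<gamma>) Mb * \<bar>jump e n \<sigma>\<bar>))"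
proof -
  define I where "I = int_faces Msh EK E"
  define Q where "Q \<sigma> = area \<sigma> *
    (deriv_sup phi_rho Mb * \<bar>jump rho n \<sigma>\<bar> + Mb * deriv_sup (phi_e \<gamma>) Mb * \<bar>jump e n \<sigma>\<bar>)" for \<sigma>
  define ps where "ps K = \<psi> (mass_center K, t)" for K
  obtain n' where n': "n = Suc n'" "n' < N" using n by (cases n) auto
  have "(\<Sum>K\<in>Msh. measure lebesgue K * remainder n K * ps K) = (\<Sum>K\<in>Msh. \<Sum>\<sigma>\<in>EK K \<inter> I. flux n K \<sigma> * ps K)"
    unfolding I_def by (intro sum.cong refl) (simp add: cell_measure_remainder sum_distrib_right)
  also have "\<dots> = (\<Sum>\<sigma>\<in>I. flux n (some_cell Msh EK \<sigma>) \<sigma> * ps (some_cell Msh EK \<sigma>)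
      + flux n (nb Msh EK (some_cell Msh EK \<sigma>) \<sigma>) \<sigma> * ps (nb Msh EK (some_cell Msh EK \<sigma>) \<sigma>))"
    unfolding I_def by (rule sum_cells_int_faces[OF mesh])
  also have "\<dots> \<le> (\<Sum>\<sigma>\<in>I. 3 * Mb * mesh_size Msh * grad_sup \<Omega> T \<psi> * Q \<sigma>)"
  proof (rule sum_mono)
    fix \<sigma> assume "\<sigma> \<in> I"
    define K L where "K = some_cell Msh EK \<sigma>" and "L = nb Msh EK K \<sigma>"
    note c = int_face_cells[OF mesh \<open>\<sigma> \<in> I\<close>[unfolded I_def], folded K_def, folded L_def]
    have "flux n K \<sigma> * ps K + flux n L \<sigma> * ps L = flux n K \<sigma> * (ps K - ps L)"
      using flux_antisym[OF n(2) c(1,3) c(4)[symmetric] c(2,5)] by (simp add: algebra_simps)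
    also have "\<dots> \<le> \<bar>flux n K \<sigma>\<bar> * \<bar>ps K - ps L\<bar>" by (simp add: abs_mult[symmetric])
    also have "\<dots> \<le> (3/2 * Mb * Q \<sigma>) * (2 * grad_sup \<Omega> T \<psi> * mesh_size Msh)"
    proof (rule mult_mono)
      show "\<bar>flux n K \<sigma>\<bar> \<le> 3/2 * Mb * Q \<sigma>"
        using flux_abs_le[OF n'(2) Mb bnds c(1,3) c(4)[symmetric] c(2,5)] unfolding Q_def K_def L_def n'(1) .
      show "\<bar>ps K - ps L\<bar> \<le> 2 * grad_sup \<Omega> T \<psi> * mesh_size Msh"
        unfolding ps_def using test_fun_neighbour_centres[OF mesh tf T_pos c(1,3,2,5) t] .
    qed (use Mb area_pos mesh_face(3)[OF mesh c(1,2)] in \<open>auto simp: Q_def intro!: mult_nonneg_nonneg add_nonneg_nonneg\<close>)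
    finally show "flux n K \<sigma> * ps K + flux n L \<sigma> * ps L \<le> 3 * Mb * mesh_size Msh * grad_sup \<Omega> T \<psi> * Q \<sigma>"
      by (simp add: algebra_simps)
  qed
  finally show ?thesis unfolding ps_def Q_def I_def sum_distrib_left .
qed

lemma neg_norm_remainder_le:
  assumes Mb: "Mb > 1"
    and bnds: "\<forall>n\<le>N. \<forall>K\<in>Msh. rho n K \<le> Mb \<and> 1 / rho n K \<le> Mb \<and> e n K \<le> Mb \<and> 1 / e n K \<le> Mb
             \<and> (\<forall>\<sigma>\<in>EK K. \<bar>u n K \<sigma>\<bar> \<le> Mb)"
  shows "neg_norm \<Omega> Msh T dt {1..N} remainder
    \<le> ereal (3 * Mb * (deriv_sup phi_rho Mb * bv_norm Msh E EK area dt {0..N} rho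
             + Mb * deriv_sup (phi_e \<gamma>) Mb * bv_norm Msh E EK area dt {0..N} e) * mesh_size Msh)"
proof -
  define Q where "Q n = (\<Sum>\<sigma>\<in>int_faces Msh EK E. area \<sigma> *
    (deriv_sup phi_rho Mb * \<bar>jump rho n \<sigma>\<bar> + Mb * deriv_sup (phi_e \<gamma>) Mb * \<bar>jump e n \<sigma>\<bar>))" for n
  define h where "h = mesh_size Msh"
  have Q_nonneg: "0 \<le> Q n" for n
    unfolding Q_def using area_pos Mb by (intro sum_nonneg) (auto simp: int_faces_def)
  have bv: "(\<Sum>n\<in>{0..N}. dt * Q n) = deriv_sup phi_rho Mb * bv_norm Msh E EK area dt {0..N} rho
             + Mb * deriv_sup (phi_e \<gamma>) Mb * bv_norm Msh E EK area dt {0..N} e"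
    unfolding Q_def bv_norm_def by (simp add: sum_distrib_left sum.distrib algebra_simps)
  have "0 \<le> h" unfolding h_def using mesh_size_nonneg[OF mesh] .
  show ?thesis unfolding neg_norm_def
  proof (rule SUP_least, clarify)
    fix \<psi> assume tf: "test_fun \<Omega> T \<psi>" and "grad_sup \<Omega> T \<psi> \<noteq> 0"
    define G where "G = grad_sup \<Omega> T \<psi>"
    have "bounded \<Omega>" "\<Omega> \<noteq> {}" using polytopal_meshD(1)[OF mesh] polytopal_mesh_nonempty(2)[OF mesh] .
    then have "G > 0" using grad_sup_nonneg tf T_pos \<open>grad_sup \<Omega> T \<psi> \<noteq> 0\<close>
      unfolding G_def test_fun_def by fastforce
    have "(\<Sum>n\<in>{1..N}. dt * (\<Sum>K\<in>Msh. measure lebesgue K * remainder n K * \<psi> (mass_center K, real n * dt)))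
        \<le> (\<Sum>n\<in>{1..N}. dt * (3 * Mb * h * G * Q n))"
      using tested_remainder_le[OF _ _ Mb bnds tf] dt_pos unfolding Q_def G_def h_def
      by (intro sum_mono mult_left_mono) auto
    also have "\<dots> = 3 * Mb * h * G * (\<Sum>n\<in>{1..N}. dt * Q n)"
      by (simp add: sum_distrib_left algebra_simps)
    also have "\<dots> \<le> 3 * Mb * h * G * (\<Sum>n\<in>{0..N}. dt * Q n)"
    proof (rule mult_left_mono)
      show "(\<Sum>n\<in>{1..N}. dt * Q n) \<le> (\<Sum>n\<in>{0..N}. dt * Q n)"
        by (rule sum_mono2) (use dt_pos Q_nonneg in auto)
    qed (use Mb \<open>0 \<le> h\<close> \<open>G > 0\<close> in auto)
    finally show "ereal (1 / grad_sup \<Omega> T \<psi> * (\<Sum>n\<in>{1..N}. dt *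
        (\<Sum>K\<in>Msh. measure lebesgue K * remainder n K * \<psi> (mass_center K, real n * dt))))
      \<le> ereal (3 * Mb * (deriv_sup phi_rho Mb * bv_norm Msh E EK area dt {0..N} rho
             + Mb * deriv_sup (phi_e \<gamma>) Mb * bv_norm Msh E EK area dt {0..N} e) * mesh_size Msh)"
      using \<open>G > 0\<close> unfolding bv G_def h_def by (simp add: field_simps)
  qed
qed

end

theorem theorem2p9:
  fixes \<Omega> :: "'a::euclidean_space set" and Msh :: "'a set set" and E :: "'a set set"
    and EK :: "'a set \<Rightarrow> 'a set set" and area :: "'a set \<Rightarrow> real"
    and T \<gamma> :: real and N :: nat
    and rho e p rhof ef :: "nat \<Rightarrow> 'a set \<Rightarrow> real"
    and u :: "nat \<Rightarrow> 'a set \<Rightarrow> 'a set \<Rightarrow> real"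
  defines "dt \<equiv> T / real N"
  assumes mesh: "polytopal_mesh \<Omega> Msh E EK"
    and area_pos: "\<forall>\<sigma>\<in>E. area \<sigma> > 0"
    and T_pos: "T > 0" and N_pos: "N \<ge> 1"
    and gamma: "\<gamma> > 1"
    and u_int: "\<forall>n\<le>N. \<forall>K\<in>Msh. \<forall>L\<in>Msh. \<forall>\<sigma>. K \<noteq> L \<and> \<sigma> \<in> EK K \<and> \<sigma> \<in> EK L
                  \<longrightarrow> u n L \<sigma> = - u n K \<sigma>"
    and u_ext: "\<forall>n\<le>N. \<forall>K\<in>Msh. \<forall>\<sigma>\<in>EK K \<inter> ext_faces Msh EK E. u n K \<sigma> = 0"
    and pos: "\<forall>n\<le>N. \<forall>K\<in>Msh. rho n K > 0 \<and> e n K > 0 \<and> p n K > 0"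
    and face_pos: "\<forall>n<N. \<forall>\<sigma>\<in>E. rhof (Suc n) \<sigma> > 0 \<and> ef (Suc n) \<sigma> > 0"
    and mass: "\<forall>n<N. \<forall>K\<in>Msh.
       measure lebesgue K / dt * (rho (Suc n) K - rho n K)
       + (\<Sum>\<sigma>\<in>EK K. area \<sigma> * rhof (Suc n) \<sigma> * u (Suc n) K \<sigma>) = 0"
    and energy: "\<forall>n<N. \<forall>K\<in>Msh.
       measure lebesgue K / dt * (rho (Suc n) K * e (Suc n) K - rho n K * e n K)
       + (\<Sum>\<sigma>\<in>EK K. area \<sigma> * rhof (Suc n) \<sigma> * u (Suc n) K \<sigma> * ef (Suc n) \<sigma>)
       + p (Suc n) K * (\<Sum>\<sigma>\<in>EK K. area \<sigma> * u (Suc n) K \<sigma>) \<ge> 0"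
    and eos: "\<forall>n<N. \<forall>K\<in>Msh. p (Suc n) K = (\<gamma> - 1) * rho (Suc n) K * e (Suc n) K"
    and upwind: "\<forall>n<N. \<forall>K\<in>Msh. \<forall>L\<in>Msh. \<forall>\<sigma>. K \<noteq> L \<and> \<sigma> \<in> EK K \<and> \<sigma> \<in> EK L \<longrightarrow>
       (if u (Suc n) K \<sigma> \<ge> 0 then
          between (rhof (Suc n) \<sigma>) (rho (Suc n) K) (xKL phi_rho (rho (Suc n) K) (rho (Suc n) L))
          \<and> between (ef (Suc n) \<sigma>) (e (Suc n) K) (xKL (phi_e \<gamma>) (e (Suc n) K) (e (Suc n) L))
        else
          between (rhof (Suc n) \<sigma>) (rho (Suc n) L) (xKL phi_rho (rho (Suc n) K) (rho (Suc n) L))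
          \<and> between (ef (Suc n) \<sigma>) (e (Suc n) L) (xKL (phi_e \<gamma>) (e (Suc n) K) (e (Suc n) L)))"
  shows
    "(\<forall>n<N. \<forall>K\<in>Msh.
        measure lebesgue K / dt * (eta \<gamma> (rho (Suc n) K) (e (Suc n) K) - eta \<gamma> (rho n K) (e n K))
        + (\<Sum>\<sigma>\<in>EK K. area \<sigma> * eta \<gamma> (rhof (Suc n) \<sigma>) (ef (Suc n) \<sigma>) * u (Suc n) K \<sigma>)
        + measure lebesgue K * dR \<gamma> Msh E EK area rho rhof e ef u (Suc n) K \<le> 0)
   \<and> (\<forall>n<N. \<forall>K\<in>Msh. \<forall>L\<in>Msh. \<forall>\<sigma>. K \<noteq> L \<and> \<sigma> \<in> EK K \<and> \<sigma> \<in> EK L \<longrightarrow>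
        dR_flux \<gamma> Msh EK area rho rhof e ef u (Suc n) L \<sigma>
          = - dR_flux \<gamma> Msh EK area rho rhof e ef u (Suc n) K \<sigma>)
   \<and> (\<forall>n<N. (\<Sum>K\<in>Msh. measure lebesgue K * eta \<gamma> (rho (Suc n) K) (e (Suc n) K))
             \<le> (\<Sum>K\<in>Msh. measure lebesgue K * eta \<gamma> (rho n K) (e n K)))
   \<and> (\<forall>Mb::real. Mb > 1 \<and>
        (\<forall>n\<le>N. \<forall>K\<in>Msh. rho n K \<le> Mb \<and> 1 / rho n K \<le> Mb \<and> e n K \<le> Mb \<and> 1 / e n K \<le> Mb
             \<and> (\<forall>\<sigma>\<in>EK K. \<bar>u n K \<sigma>\<bar> \<le> Mb)) \<longrightarrow>
        neg_norm \<Omega> Msh T dt {1..N} (dR \<gamma> Msh E EK area rho rhof e ef u)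
          \<le> ereal (3 * Mb *
              (max \<bar>deriv phi_rho (1 / Mb)\<bar> \<bar>deriv phi_rho Mb\<bar> * bv_norm Msh E EK area dt {0..N} rho
               + Mb * max \<bar>deriv (phi_e \<gamma>) (1 / Mb)\<bar> \<bar>deriv (phi_e \<gamma>) Mb\<bar> * bv_norm Msh E EK area dt {0..N} e)
              * mesh_size Msh))"
proof -
  interpret entropy_scheme \<Omega> Msh E EK area T \<gamma> N rho e p rhof ef u dt
  proof
    show "dt = T / real N" unfolding dt_def ..
  qed (fact mesh area_pos T_pos N_pos gamma u_int u_ext pos face_pos mass energy eos upwind)+
  show ?thesis
    by (intro conjI allI impI ballI local_entropy global_entropy neg_norm_remainder_le)
       (auto intro: flux_antisym[OF Suc_leI])
qed

end
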